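(* Let $P\in\mathbb R^3$. There exist finite constants $c_a,c_b>0$ such that for all $n,m\in\mathbb N$, all $g$ with $|g|\le1$ and $|g|<1/c_a$, and all $\psi\in D(H_{P,0}^{1/2})$, $$\langle\psi,H_{P,0}\psi\rangle\le\frac{1}{1-|g|c_a}\Big[\langle\psi,H'_P|^n_m\psi\rangle+|g|c_b\langle\psi,\psi\rangle\Big],$$ where $\langle\psi,H'_P|^n_m\psi\rangle$ is understood in the sense of quadratic forms.
   Context: $\mathcal F$ is the bosonic Fock space over $L^2(\mathbb R^3,dk)$ with $b(k),b^*(k)$ satisfying the canonical commutation relations. $\omega(k)=|k|$, $\rho(k)=(2\pi)^{-3/2}(2|k|)^{-1/2}$, $H^f=\int\omega b^*b\,dk$, $P^f=\int k\,b^*b\,dk$, $H_{P,0}=\frac12(P-P^f)^2+H^f$, $\Phi|^\Lambda_\tau=\int_{\tau\le|k|<\Lambda}\rho(k)(b(k)+b^*(k))dk$. Fix $1<\kappa<2$, $g\in\mathbb R$, $\beta>1$, $0<\gamma<\frac12$, $\sigma_n=\kappa\beta^n$, $\tau_m=\kappa\gamma^m$. With $\beta_G(k)=-g\rho(k)/(\frac12|k|^2+|k|)$ and $B|^n_0=\int_{\kappa\le|k|<\sigma_n}k\beta_G(k)b(k)dk$ (adjoint $B^*|^n_0$), $H'_P|^n_0=\frac12(P-P^f)^2+H^f+\frac12[(B|^n_0)^2+(B^*|^n_0)^2]+B^*|^n_0\cdot B|^n_0-(P-P^f)\cdot B|^n_0-B^*|^n_0\cdot(P-P^f)$ and $H'_P|^n_m=H'_P|^n_0+g\Phi|^\kappa_{\tau_m}$.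 *)

theory Defs
  imports "HOL-Analysis.Analysis"
begin

text \<open>Concrete model of the bosonic Fock space over L^2(R^3): a Fock vector is a
sequence psi of n-particle wave functions psi n, each a function of a configuration
x :: nat => real^3 (only the coordinates x 0, ..., x (n-1) matter), symmetric,
measurable and square integrable w.r.t. the product Lebesgue measure, with
summable squared norms.\<close>

type_synonym config = "nat \<Rightarrow> real^3"
type_synonym fock = "nat \<Rightarrow> config \<Rightarrow> complex"

definition cfg_measure :: "nat \<Rightarrow> config measure" where
  "cfg_measure n = PiM {..<n} (\<lambda>_. lborel)"

definition fock_vec :: "fock \<Rightarrow> bool" where
  "fock_vec psi \<longleftrightarrow>
     (\<forall>n. psi n \<in> borel_measurable (cfg_measure n)
        \<and> integrable (cfg_measure n) (\<lambda>x. (cmod (psi n x))\<^sup>2)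
        \<and> (\<forall>p x. p permutes {..<n} \<longrightarrow> x \<in> space (cfg_measure n) \<longrightarrow> psi n (x \<circ> p) = psi n x))
     \<and> summable (\<lambda>n. \<integral>x. (cmod (psi n x))\<^sup>2 \<partial>cfg_measure n)"

definition fock_inner :: "fock \<Rightarrow> fock \<Rightarrow> complex" where
  "fock_inner phi psi = (\<Sum>n. \<integral>x. cnj (phi n x) * psi n x \<partial>cfg_measure n)"

definition fock_normsq :: "fock \<Rightarrow> real" where
  "fock_normsq psi = (\<Sum>n. \<integral>x. (cmod (psi n x))\<^sup>2 \<partial>cfg_measure n)"

definition kcons :: "real^3 \<Rightarrow> config \<Rightarrow> nat \<Rightarrow> config" where
  "kcons k x n = restrict (\<lambda>i. if i = 0 then k else x (i - 1)) {..<Suc n}"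

definition ann :: "(real^3 \<Rightarrow> complex) \<Rightarrow> fock \<Rightarrow> fock" where
  "ann f psi = (\<lambda>n x. complex_of_real (sqrt (real n + 1)) *
       (\<integral>k. f k * psi (Suc n) (kcons k x n) \<partial>lborel))"

definition Pf :: "nat \<Rightarrow> config \<Rightarrow> real^3" where
  "Pf n x = (\<Sum>i<n. x i)"

definition mulPPf :: "real^3 \<Rightarrow> 3 \<Rightarrow> fock \<Rightarrow> fock" where
  "mulPPf P j psi = (\<lambda>n x. complex_of_real ((P - Pf n x) $ j) * psi n x)"

text \<open>quadratic form of H_{P,0} = (P-P^f)^2/2 + H^f (value infinity outside the form
  domain D(H_{P,0}^{1/2}))\<close>
definition H0_form :: "real^3 \<Rightarrow> fock \<Rightarrow> ennreal" where
  "H0_form P psi = (\<Sum>n. \<integral>\<^sup>+ x. ennreal ((1/2 * (norm (P - Pf n x))\<^sup>2 + (\<Sum>i<n. norm (x i)))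
                                   * (cmod (psi n x))\<^sup>2) \<partial>cfg_measure n)"

definition rho :: "real^3 \<Rightarrow> real" where
  "rho k = (2 * pi) powr (-3/2) * (2 * norm k) powr (-1/2)"

definition betaG :: "real \<Rightarrow> real^3 \<Rightarrow> real" where
  "betaG g k = - g * rho k / (1/2 * (norm k)\<^sup>2 + norm k)"

definition fB :: "real \<Rightarrow> real \<Rightarrow> real \<Rightarrow> 3 \<Rightarrow> real^3 \<Rightarrow> complex" where
  "fB g kappa s j k = (if kappa \<le> norm k \<and> norm k < s then complex_of_real (k $ j * betaG g k) else 0)"

definition fPhi :: "real \<Rightarrow> real \<Rightarrow> real^3 \<Rightarrow> complex" where
  "fPhi tau Lam k = (if tau \<le> norm k \<and> norm k < Lam then complex_of_real (rho k) else 0)"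

text \<open>Quadratic form of H'_P|^n_m, with sig = sigma_n and tau = tau_m:
  <psi,H_{P,0}psi> + 1/2(<psi,B^2 psi> + <psi,B^*^2 psi>) + <psi,B^*.B psi>
  - <psi,(P-P^f).B psi> - <psi,B^*.(P-P^f) psi> + g <psi, Phi|^kappa_tau psi>,
  where each term is written out via the adjoint relations:
  <psi,B^*^2 psi> = conj <psi,B^2 psi>, <psi,B^*.B psi> = sum_j ||B_j psi||^2,
  <psi,B^*.(P-P^f)psi> = conj <psi,(P-P^f).B psi>, <psi,Phi psi> = 2 Re <psi,b(rho 1) psi>.\<close>
definition Hprime_form :: "real \<Rightarrow> real \<Rightarrow> real \<Rightarrow> real \<Rightarrow> real^3 \<Rightarrow> fock \<Rightarrow> real" where
  "Hprime_form g kappa sig tau P psi =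
     enn2real (H0_form P psi)
     + (\<Sum>j\<in>UNIV. Re (fock_inner psi (ann (fB g kappa sig j) (ann (fB g kappa sig j) psi))))
     + (\<Sum>j\<in>UNIV. fock_normsq (ann (fB g kappa sig j) psi))
     - 2 * (\<Sum>j\<in>UNIV. Re (fock_inner psi (mulPPf P j (ann (fB g kappa sig j) psi))))
     + g * (2 * Re (fock_inner psi (ann (fPhi tau kappa) psi)))"

end

theory Submission
  imports Defs
begin

text \<open>Each of the terms by which the quadratic form of \<open>H'\<^sub>P|\<^sup>n\<^sub>m\<close> differs from that of
\<open>H\<^sub>P\<^sub>,\<^sub>0\<close> is bounded, uniformly in the cut-offs, by \<open>|g|\<close> times a combination of
\<open>\<langle>\<psi>, H\<^sub>P\<^sub>,\<^sub>0 \<psi>\<rangle>\<close> and \<open>\<parallel>\<psi>\<parallel>\<^sup>2\<close>; the term \<open>B\<^sup>* \<cdot> B\<close> is nonnegative and can be dropped.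
The coupling functions of \<open>B\<close> are supported in \<open>|k| \<ge> \<kappa> > 1\<close> and bounded by
\<open>2|g| |k|\<^sup>-\<^sup>3\<^sup>/\<^sup>2\<close>, that of \<open>\<Phi>|\<^sup>\<kappa>\<^sub>\<tau>\<close> by \<open>|k|\<^sup>-\<^sup>1\<^sup>/\<^sup>2\<close> on \<open>|k| < 2\<close>.
On the \<open>n\<close>-boson sector, Cauchy-Schwarz with the weight \<open>|k|\<close> together with the permutation
symmetry of \<open>\<psi>\<close> gives the standard estimate \<open>\<parallel>b(F)\<psi>\<parallel>\<^sup>2 \<le> (\<integral>|F|\<^sup>2/|k|) \<langle>\<psi>, H\<^sup>f \<psi>\<rangle>\<close>,
which together with AM-GM handles the terms linear in \<open>b\<close>. For \<open>B\<^sup>2\<close>, AM-GM is applied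
pointwise with the pair weight \<open>(|k| + |k'|)/M\<close>, \<open>M\<close> the number of bosons with momentum
at least 1; by symmetry its expectation is controlled by \<open>H\<^sup>f\<close> again.\<close>

abbreviation M :: "nat \<Rightarrow> config measure" where
  "M \<equiv> cfg_measure"

section \<open>Permutations and adjoining a particle\<close>

lemma comp_permutes_in_PiE:
  assumes "p permutes I" and "y \<in> PiE I (\<lambda>_. UNIV)"
  shows "y \<circ> p \<in> PiE I (\<lambda>_. UNIV)"
  using assms by (auto simp: PiE_iff extensional_def permutes_not_in)

lemma measurable_comp_permutes:
  assumes p: "p permutes I"
  shows "(\<lambda>y. y \<circ> p) \<in> measurable (PiM I (\<lambda>_. N)) (PiM I (\<lambda>_. N))"
proof -
  have "(\<lambda>y. \<lambda>i\<in>I. y (p i)) \<in> measurable (PiM I (\<lambda>_. N)) (PiM I (\<lambda>_. N))"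
    using p by (intro measurable_restrict measurable_component_singleton) (simp add: permutes_in_image)
  moreover have "(\<lambda>i\<in>I. y (p i)) = y \<circ> p" if "y \<in> space (PiM I (\<lambda>_. N))" for y
    using comp_permutes_in_PiE[OF p, of y] that
    by (auto simp: space_PiM PiE_iff extensional_def fun_eq_iff)
  ultimately show ?thesis
    by (simp cong: measurable_cong)
qed

lemma distr_comp_permutes:
  assumes p: "p permutes I" and I: "finite I" and N: "sigma_finite_measure N"
  shows "distr (PiM I (\<lambda>_. N)) (PiM I (\<lambda>_. N)) (\<lambda>y. y \<circ> p) = PiM I (\<lambda>_. N)"
proof -
  interpret product_sigma_finite "\<lambda>_. N"
    using N by (simp add: product_sigma_finite_def)
  have inv: "inv p permutes I"
    using p by (rule permutes_inv)
  show ?thesis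
  proof (rule PiM_eqI[OF I])
    fix A assume A: "\<And>i. i \<in> I \<Longrightarrow> A i \<in> sets N"
    have "(\<lambda>y. y \<circ> p) -` Pi\<^sub>E I A \<inter> space (PiM I (\<lambda>_. N)) = Pi\<^sub>E I (\<lambda>j. A (inv p j))"
    proof (intro set_eqI iffI)
      fix y assume y: "y \<in> (\<lambda>y. y \<circ> p) -` Pi\<^sub>E I A \<inter> space (PiM I (\<lambda>_. N))"
      have "y j \<in> A (inv p j)" if "j \<in> I" for j
        using y that PiE_mem[of "y \<circ> p" I A "inv p j"] permutes_in_image[OF inv] permutes_inverses(1)[OF p]
        by auto
      then show "y \<in> Pi\<^sub>E I (\<lambda>j. A (inv p j))"
        using y by (auto simp: space_PiM PiE_def extensional_def)
    next
      fix y assume y: "y \<in> Pi\<^sub>E I (\<lambda>j. A (inv p j))"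
      have "y (p i) \<in> A i" if "i \<in> I" for i
        using PiE_mem[OF y, of "p i"] that permutes_in_image[OF p] permutes_inverses(2)[OF p] by auto
      moreover have "y j \<in> space N" if "j \<in> I" for j
        using PiE_mem[OF y that] sets.sets_into_space[OF A[of "inv p j"]] that
          permutes_in_image[OF inv] by auto
      ultimately show "y \<in> (\<lambda>y. y \<circ> p) -` Pi\<^sub>E I A \<inter> space (PiM I (\<lambda>_. N))"
        using y p by (auto simp: space_PiM PiE_def extensional_def permutes_not_in)
    qed
    then have "emeasure (distr (PiM I (\<lambda>_. N)) (PiM I (\<lambda>_. N)) (\<lambda>y. y \<circ> p)) (Pi\<^sub>E I A)
        = emeasure (PiM I (\<lambda>_. N)) (Pi\<^sub>E I (\<lambda>j. A (inv p j)))"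
      using A measurable_comp_permutes[OF p] by (subst emeasure_distr) (auto intro!: sets_PiM_I_finite I)
    also have "\<dots> = (\<Prod>j\<in>I. emeasure N (A (inv p j)))"
      using A inv I by (subst emeasure_PiM) (auto simp: permutes_in_image)
    also have "\<dots> = (\<Prod>i\<in>I. emeasure N (A i))"
      using prod.permute[OF inv, of "\<lambda>i. emeasure N (A i)"] by (simp add: comp_def)
    finally show "emeasure (distr (PiM I (\<lambda>_. N)) (PiM I (\<lambda>_. N)) (\<lambda>y. y \<circ> p)) (Pi\<^sub>E I A)
        = (\<Prod>i\<in>I. emeasure N (A i))" .
  qed simp
qed

lemma nn_integral_comp_permutes:
  assumes p: "p permutes I" and "finite I" "sigma_finite_measure N"
    and h: "h \<in> borel_measurable (PiM I (\<lambda>_. N))"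
  shows "(\<integral>\<^sup>+y. h (y \<circ> p) \<partial>PiM I (\<lambda>_. N)) = (\<integral>\<^sup>+y. h y \<partial>PiM I (\<lambda>_. N))"
proof -
  have "(\<integral>\<^sup>+y. h y \<partial>PiM I (\<lambda>_. N))
      = (\<integral>\<^sup>+y. h y \<partial>distr (PiM I (\<lambda>_. N)) (PiM I (\<lambda>_. N)) (\<lambda>y. y \<circ> p))"
    by (simp add: distr_comp_permutes[OF assms(1-3)])
  also have "\<dots> = (\<integral>\<^sup>+y. h (y \<circ> p) \<partial>PiM I (\<lambda>_. N))"
    using h measurable_comp_permutes[OF p] by (subst nn_integral_distr) auto
  finally show ?thesis ..
qed

lemma space_cfg_measure: "space (M n) = PiE {..<n} (\<lambda>_. UNIV)"
  by (simp add: cfg_measure_def space_PiM)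

lemma measurable_cfg_comp_permutes:
  "p permutes {..<n} \<Longrightarrow> (\<lambda>y. y \<circ> p) \<in> measurable (M n) (M n)"
  unfolding cfg_measure_def by (rule measurable_comp_permutes)

lemma nn_integral_cfg_comp_permutes:
  assumes "p permutes {..<n}" and "h \<in> borel_measurable (M n)"
  shows "(\<integral>\<^sup>+y. h (y \<circ> p) \<partial>M n) = (\<integral>\<^sup>+y. h y \<partial>M n)"
  using assms nn_integral_comp_permutes[of p "{..<n}" lborel h]
  by (simp add: cfg_measure_def sigma_finite_lborel)

definition rotate_index :: "nat \<Rightarrow> nat \<Rightarrow> nat" where
  "rotate_index n i = (if i = 0 then n else if i \<le> n then i - 1 else i)"

lemma rotate_index_permutes: "rotate_index n permutes {..<Suc n}"
proof (rule bij_imp_permutes)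
  show "bij_betw (rotate_index n) {..<Suc n} {..<Suc n}"
    by (rule bij_betw_byWitness[where f'="\<lambda>i. if i = n then 0 else if i < n then i + 1 else i"])
      (auto simp: rotate_index_def)
qed (auto simp: rotate_index_def)

lemma kcons_0 [simp]: "kcons k x n 0 = k"
  by (simp add: kcons_def)

lemma kcons_Suc [simp]: "i < n \<Longrightarrow> kcons k x n (Suc i) = x i"
  by (simp add: kcons_def)

lemma kcons_eq_rotate:
  assumes "x \<in> space (M n)"
  shows "kcons k x n = x(n := k) \<circ> rotate_index n"
proof
  fix i
  show "kcons k x n i = (x(n := k) \<circ> rotate_index n) i"
    using assms by (auto simp: kcons_def rotate_index_def space_cfg_measure PiE_def extensional_def)
qed

lemma measurable_cfg_component [measurable]:
  "i < n \<Longrightarrow> (\<lambda>y. y i) \<in> measurable (M n) (lborel :: (real^3) measure)"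
  unfolding cfg_measure_def by (rule measurable_component_singleton) simp

lemma borel_measurable_norm_cfg_component [measurable]:
  "i < n \<Longrightarrow> (\<lambda>y. norm (y i)) \<in> borel_measurable (M n)"
proof -
  assume "i < n"
  then have "(\<lambda>y. y i) \<in> borel_measurable (M n)"
    using measurable_cfg_component by simp
  from measurable_compose[OF this borel_measurable_norm] show ?thesis .
qed

lemma measurable_kcons [measurable]:
  "(\<lambda>p. kcons (snd p) (fst p) n) \<in> measurable (M n \<Otimes>\<^sub>M lborel) (M (Suc n))"
proof -
  have "(\<lambda>p. \<lambda>i\<in>{..<Suc n}. if i = 0 then snd p else fst p (i - 1))
      \<in> measurable (M n \<Otimes>\<^sub>M lborel) (M (Suc n))"
    unfolding cfg_measure_def
  proof (rule measurable_restrict)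
    fix i assume "i \<in> {..<Suc n}"
    then show "(\<lambda>p. if i = 0 then snd p else fst p (i - 1))
        \<in> measurable (Pi\<^sub>M {..<n} (\<lambda>_. lborel) \<Otimes>\<^sub>M lborel) (lborel :: (real^3) measure)"
      by (cases "i = 0")
        (auto intro: measurable_compose[OF measurable_fst measurable_component_singleton])
  qed
  then show ?thesis
    by (simp add: kcons_def)
qed

lemma measurable_kcons_momentum [measurable]:
  "(\<lambda>k. kcons k x n) \<in> measurable (lborel :: (real^3) measure) (M (Suc n))"
proof -
  have "(\<lambda>k. \<lambda>i\<in>{..<Suc n}. if i = 0 then k else x (i - 1))
      \<in> measurable (lborel :: (real^3) measure) (M (Suc n))"
    unfolding cfg_measure_def by (rule measurable_restrict) simp
  then show ?thesis
    by (simp add: kcons_def)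
qed

lemma borel_measurable_nn_integral_kcons [measurable]:
  assumes "h \<in> borel_measurable (M (Suc n))"
  shows "(\<lambda>x. \<integral>\<^sup>+k. h (kcons k x n) \<partial>lborel) \<in> borel_measurable (M n)"
  using sigma_finite_measure.borel_measurable_nn_integral_fst[OF sigma_finite_lborel,
      OF measurable_comp[OF measurable_kcons assms]]
  by (simp add: comp_def)

text \<open>Adjoining the momentum of one more boson to an \<open>n\<close>-boson configuration is, up to a
  relabelling, the product decomposition of \<open>M (Suc n)\<close>.\<close>

lemma nn_integral_cfg_Suc:
  assumes h: "h \<in> borel_measurable (M (Suc n))"
  shows "(\<integral>\<^sup>+y. h y \<partial>M (Suc n)) = (\<integral>\<^sup>+x. (\<integral>\<^sup>+k. h (kcons k x n) \<partial>lborel) \<partial>M n)"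
proof -
  interpret product_sigma_finite "\<lambda>_::nat. (lborel :: (real^3) measure)"
    by (simp add: product_sigma_finite_def sigma_finite_lborel)
  have hr: "(\<lambda>y. h (y \<circ> rotate_index n)) \<in> borel_measurable (M (Suc n))"
    using measurable_comp[OF measurable_comp_permutes[OF rotate_index_permutes, where N=lborel]
        h[unfolded cfg_measure_def]]
    by (simp add: comp_def cfg_measure_def)
  have "(\<integral>\<^sup>+y. h y \<partial>M (Suc n)) = (\<integral>\<^sup>+y. h (y \<circ> rotate_index n) \<partial>M (Suc n))"
    using nn_integral_cfg_comp_permutes[OF rotate_index_permutes h] by simp
  also have "\<dots> = (\<integral>\<^sup>+x. (\<integral>\<^sup>+k. h (x(n := k) \<circ> rotate_index n) \<partial>lborel) \<partial>M n)"
    using product_nn_integral_insert[of "{..<n}" n "\<lambda>y. h (y \<circ> rotate_index n)"] hr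
    by (simp add: cfg_measure_def lessThan_Suc)
  also have "\<dots> = (\<integral>\<^sup>+x. (\<integral>\<^sup>+k. h (kcons k x n) \<partial>lborel) \<partial>M n)"
    by (rule nn_integral_cong) (simp add: kcons_eq_rotate)
  finally show ?thesis .
qed

lemma nn_integral_cfg_Suc_Suc:
  assumes "h \<in> borel_measurable (M (Suc (Suc n)))"
  shows "(\<integral>\<^sup>+y. h y \<partial>M (Suc (Suc n)))
    = (\<integral>\<^sup>+x. (\<integral>\<^sup>+k. (\<integral>\<^sup>+k'. h (kcons k' (kcons k x n) (Suc n)) \<partial>lborel) \<partial>lborel) \<partial>M n)"
  using assms by (simp add: nn_integral_cfg_Suc[of h]
      nn_integral_cfg_Suc[of "\<lambda>z. \<integral>\<^sup>+k'. h (kcons k' z (Suc n)) \<partial>lborel"])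


section \<open>Integrability of powers of \<open>|k|\<close> in three dimensions\<close>

lemma nn_integral_prod_Basis:
  fixes w :: "real \<Rightarrow> ennreal"
  assumes [measurable]: "w \<in> borel_measurable borel"
  shows "(\<integral>\<^sup>+k. (\<Prod>b\<in>Basis. w (k \<bullet> b)) \<partial>(lborel :: (real^3) measure)) = (\<integral>\<^sup>+t. w t \<partial>lborel) ^ 3"
proof -
  interpret product_sigma_finite "\<lambda>_::real^3. (lborel :: real measure)"
    by (simp add: product_sigma_finite_def sigma_finite_lborel)
  have "(\<integral>\<^sup>+k. (\<Prod>b\<in>Basis. w (k \<bullet> b)) \<partial>(lborel :: (real^3) measure))
      = (\<integral>\<^sup>+f. (\<Prod>b\<in>Basis. w ((\<Sum>b'\<in>Basis. f b' *\<^sub>R b') \<bullet> b)) \<partial>(\<Pi>\<^sub>M b\<in>(Basis::(real^3) set). lborel))"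
    by (subst lborel_eq) (simp add: nn_integral_distr)
  also have "\<dots> = (\<integral>\<^sup>+f. (\<Prod>b\<in>Basis. w (f b)) \<partial>(\<Pi>\<^sub>M b\<in>(Basis::(real^3) set). lborel))"
    by (intro nn_integral_cong prod.cong refl)
      (simp add: inner_sum_left inner_Basis if_distrib cong: if_cong)
  also have "\<dots> = (\<Prod>b\<in>(Basis::(real^3) set). (\<integral>\<^sup>+t. w t \<partial>lborel))"
    by (rule product_nn_integral_prod) auto
  finally show ?thesis
    by simp
qed

lemma nn_integral_even_le:
  fixes f :: "real \<Rightarrow> ennreal"
  assumes [measurable]: "f \<in> borel_measurable borel" and even: "\<And>t. f (-t) = f t"
  shows "(\<integral>\<^sup>+t. f t \<partial>lborel) \<le> 2 * (\<integral>\<^sup>+t. f t * indicator {0..} t \<partial>lborel)"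
proof -
  have "(\<integral>\<^sup>+t. f t \<partial>lborel) = (\<integral>\<^sup>+t. f t * indicator {0..} t + f t * indicator {..<0} t \<partial>lborel)"
    by (intro nn_integral_cong) (auto simp: indicator_def)
  also have "\<dots> = (\<integral>\<^sup>+t. f t * indicator {0..} t \<partial>lborel) + (\<integral>\<^sup>+t. f t * indicator {..<0} t \<partial>lborel)"
    by (intro nn_integral_add) auto
  also have "(\<integral>\<^sup>+t. f t * indicator {..<0} t \<partial>lborel)
      = (\<integral>\<^sup>+t. f (0 + (-1) * t) * indicator {..<0} (0 + (-1) * t) \<partial>lborel)"
    using nn_integral_real_affine[of "\<lambda>t. f t * indicator {..<0} t" "-1" 0] by simp
  also have "\<dots> \<le> (\<integral>\<^sup>+t. f t * indicator {0..} t \<partial>lborel)"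
    by (intro nn_integral_mono) (auto simp: even indicator_def)
  finally show ?thesis
    by (simp add: mult_2 add_mono)
qed

lemma nn_integral_one_plus_abs_powr_finite:
  fixes e :: real
  assumes e: "e < -1"
  shows "(\<integral>\<^sup>+t. ennreal ((1 + \<bar>t\<bar>) powr e) \<partial>lborel) < \<infinity>"
proof -
  have "(\<integral>\<^sup>+t. ennreal ((1 + \<bar>t\<bar>) powr e) \<partial>lborel)
      \<le> 2 * (\<integral>\<^sup>+t. ennreal ((1 + \<bar>t\<bar>) powr e) * indicator {0..} t \<partial>lborel)"
    by (rule nn_integral_even_le) auto
  also have "(\<integral>\<^sup>+t. ennreal ((1 + \<bar>t\<bar>) powr e) * indicator {0..} t \<partial>lborel)
      \<le> (\<integral>\<^sup>+t. indicator {0..1} t + ennreal (t powr e) * indicator {1..} t \<partial>lborel)"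
  proof (intro nn_integral_mono)
    fix t :: real
    consider "t < 0" | "0 \<le> t" "t < 1" | "1 \<le> t"
      by linarith
    then show "ennreal ((1 + \<bar>t\<bar>) powr e) * indicator {0..} t
        \<le> indicator {0..1} t + ennreal (t powr e) * indicator {1..} t"
    proof cases
      case 2
      then have "(1 + \<bar>t\<bar>) powr e \<le> 1 powr e"
        using e by (intro powr_mono2') auto
      then show ?thesis
        using 2 by (simp add: indicator_def ennreal_le_1)
    next
      case 3
      then have "ennreal ((1 + \<bar>t\<bar>) powr e) \<le> ennreal (t powr e)"
        using e by (intro ennreal_leI powr_mono2') auto
      also have "\<dots> \<le> indicator {0..1} t + ennreal (t powr e) * indicator {1..} t"
        using 3 by (simp add: indicator_def)
      finally show ?thesis
        using 3 by simp
    qed (simp add: indicator_def)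
  qed
  also have "\<dots> = emeasure lborel {0..1::real} + (\<integral>\<^sup>+t. ennreal (t powr e) * indicator {1..} t \<partial>lborel)"
    by (subst nn_integral_add) auto
  also have "(\<integral>\<^sup>+t. ennreal (t powr e) * indicator {1..} t \<partial>lborel) = ennreal (-(1 powr (e + 1)) / (e + 1))"
    by (rule nn_integral_has_integral_lebesgue') (use has_integral_powr_to_inf[of e 1] e in auto)
  finally show ?thesis
    by (rule le_less_trans) (auto simp: ennreal_mult_less_top mult_left_mono)
qed

lemma nn_integral_abs_powr_near_0_finite:
  fixes e r :: real
  assumes e: "-1 < e" and r: "0 \<le> r"
  shows "(\<integral>\<^sup>+t. ennreal (indicator {-r..r} t * \<bar>t\<bar> powr e) \<partial>lborel) < \<infinity>"
proof -
  have "(\<integral>\<^sup>+t. ennreal (indicator {-r..r} t * \<bar>t\<bar> powr e) \<partial>lborel)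
      \<le> 2 * (\<integral>\<^sup>+t. ennreal (indicator {-r..r} t * \<bar>t\<bar> powr e) * indicator {0..} t \<partial>lborel)"
    by (rule nn_integral_even_le) (auto simp: indicator_def)
  also have "(\<integral>\<^sup>+t. ennreal (indicator {-r..r} t * \<bar>t\<bar> powr e) * indicator {0..} t \<partial>lborel)
      = (\<integral>\<^sup>+t. ennreal (t powr e) * indicator {0..r} t \<partial>lborel)"
    by (intro nn_integral_cong) (auto simp: indicator_def)
  also have "\<dots> = ennreal (r powr (e + 1) / (e + 1))"
    by (rule nn_integral_has_integral_lebesgue') (use has_integral_powr_from_0[of e r] e r in auto)
  finally show ?thesis
    by (rule le_less_trans) (auto simp: ennreal_mult_less_top)
qed

lemma powr_third_cube:
  fixes x e :: real
  assumes "0 < x"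
  shows "(x powr (e / 3)) ^ 3 = x powr e"
  using assms by (simp add: powr_realpow[symmetric] powr_powr)

lemma nn_integral_norm_powr_tail_finite:
  fixes e :: real
  assumes e: "e < -3"
  shows "(\<integral>\<^sup>+k. ennreal (indicator {k. 1 \<le> norm k} k * norm k powr e) \<partial>(lborel :: (real^3) measure)) < \<infinity>"
proof -
  let ?w = "\<lambda>t::real. ennreal ((1 + \<bar>t\<bar>) powr (e / 3))"
  have pointwise: "indicator {k. 1 \<le> norm k} k * norm k powr e
      \<le> 2 powr (- e) * (\<Prod>b\<in>Basis. (1 + \<bar>k \<bullet> b\<bar>) powr (e / 3))" for k :: "real^3"
  proof (cases "1 \<le> norm k")
    case True
    have "(2 * norm k) powr e \<le> (1 + norm k) powr e"
      using True e by (intro powr_mono2') auto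
    then have "norm k powr e \<le> 2 powr (- e) * (1 + norm k) powr e"
      using True by (simp add: powr_mult powr_minus field_simps)
    also have "(1 + norm k) powr e = (\<Prod>b\<in>(Basis::(real^3) set). (1 + norm k) powr (e / 3))"
      using powr_third_cube[of "1 + norm k" e] by (simp add: add_pos_nonneg)
    also have "\<dots> \<le> (\<Prod>b\<in>Basis. (1 + \<bar>k \<bullet> b\<bar>) powr (e / 3))"
      using Basis_le_norm e by (intro prod_mono conjI powr_mono2') auto
    finally show ?thesis
      using True by (simp add: mult_left_mono)
  qed (simp add: prod_nonneg)
  have "(\<integral>\<^sup>+k. ennreal (indicator {k. 1 \<le> norm k} k * norm k powr e) \<partial>(lborel :: (real^3) measure))
      \<le> (\<integral>\<^sup>+k. ennreal (2 powr (- e)) * (\<Prod>b\<in>Basis. ?w (k \<bullet> b)) \<partial>(lborel :: (real^3) measure))"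
  proof (rule nn_integral_mono)
    fix k :: "real^3"
    show "ennreal (indicator {k. 1 \<le> norm k} k * norm k powr e) \<le> ennreal (2 powr (- e)) * (\<Prod>b\<in>Basis. ?w (k \<bullet> b))"
      using pointwise[of k] by (simp add: prod_ennreal ennreal_mult'[symmetric] ennreal_leI)
  qed
  also have "\<dots> = ennreal (2 powr (- e)) * (\<integral>\<^sup>+k. (\<Prod>b\<in>Basis. ?w (k \<bullet> b)) \<partial>(lborel :: (real^3) measure))"
    by (rule nn_integral_cmult) measurable
  also have "\<dots> = ennreal (2 powr (- e)) * (\<integral>\<^sup>+t. ?w t \<partial>lborel) ^ 3"
    by (subst nn_integral_prod_Basis) auto
  also have "\<dots> < \<infinity>"
    using nn_integral_one_plus_abs_powr_finite[of "e / 3"] e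
    by (simp add: ennreal_mult_less_top power_less_top_ennreal)
  finally show ?thesis .
qed

text \<open>The weight takes the value \<open>\<infinity>\<close> at \<open>0\<close>, where \<open>\<bar>0\<bar> powr (e / 3) = 0\<close> would spoil the
  pointwise bound on the coordinate planes; they are null sets.\<close>

lemma indicator_norm_powr_le_prod_Basis:
  fixes k :: "real^3" and e r :: real
  assumes e: "e \<le> 0"
  defines "w \<equiv> \<lambda>t::real. if t = 0 then top else ennreal (indicator {-r..r} t * \<bar>t\<bar> powr (e / 3))"
  shows "ennreal (indicator {k. 0 < norm k \<and> norm k < r} k * norm k powr e) \<le> (\<Prod>b\<in>Basis. w (k \<bullet> b))"
proof (cases "0 < norm k \<and> norm k < r")
  case True
  have in_r: "k \<bullet> b \<in> {-r..r}" if "b \<in> Basis" for b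
    using Basis_le_norm[OF that, of k] True by (simp add: abs_le_iff)
  show ?thesis
  proof (cases "\<exists>b\<in>(Basis::(real^3) set). k \<bullet> b = 0")
    case True
    then obtain b0 where "b0 \<in> (Basis::(real^3) set)" "k \<bullet> b0 = 0"
      by blast
    moreover have "w (k \<bullet> b) \<noteq> 0" if "b \<in> Basis" for b
      using in_r[OF that] by (simp add: w_def indicator_def)
    ultimately have "(\<Prod>b\<in>(Basis::(real^3) set). w (k \<bullet> b)) = top"
      by (subst ennreal_prod_eq_top) (auto simp: w_def)
    then show ?thesis
      by simp
  next
    case False
    have "norm k powr e = (\<Prod>b\<in>(Basis::(real^3) set). norm k powr (e / 3))"
      using True powr_third_cube[of "norm k" e] by simp
    also have "\<dots> \<le> (\<Prod>b\<in>Basis. \<bar>k \<bullet> b\<bar> powr (e / 3))"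
      using Basis_le_norm False e by (intro prod_mono conjI powr_mono2') auto
    also have "\<dots> = (\<Prod>b\<in>Basis. indicator {-r..r} (k \<bullet> b) * \<bar>k \<bullet> b\<bar> powr (e / 3))"
      using in_r by (intro prod.cong) (auto simp: indicator_def)
    finally show ?thesis
      using True False by (simp add: w_def prod_ennreal ennreal_leI)
  qed
qed (simp add: prod_nonneg)

lemma nn_integral_norm_powr_ball_finite:
  fixes e r :: real
  assumes e: "-3 < e" "e \<le> 0" and r: "0 \<le> r"
  shows "(\<integral>\<^sup>+k. ennreal (indicator {k. 0 < norm k \<and> norm k < r} k * norm k powr e) \<partial>(lborel :: (real^3) measure))
    < \<infinity>"
proof -
  let ?w = "\<lambda>t::real. if t = 0 then top else ennreal (indicator {-r..r} t * \<bar>t\<bar> powr (e / 3))"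
  have "(\<integral>\<^sup>+k. ennreal (indicator {k. 0 < norm k \<and> norm k < r} k * norm k powr e) \<partial>(lborel :: (real^3) measure))
      \<le> (\<integral>\<^sup>+t. ?w t \<partial>lborel) ^ 3"
    using indicator_norm_powr_le_prod_Basis[OF e(2)]
    by (subst nn_integral_prod_Basis[symmetric]) (auto intro!: nn_integral_mono)
  also have "(\<integral>\<^sup>+t. ?w t \<partial>lborel) = (\<integral>\<^sup>+t. ennreal (indicator {-r..r} t * \<bar>t\<bar> powr (e / 3)) \<partial>lborel)"
    by (rule nn_integral_cong_AE) (use AE_lborel_singleton[of 0] in \<open>auto elim!: eventually_mono\<close>)
  also have "\<dots> ^ 3 < \<infinity>"
    using nn_integral_abs_powr_near_0_finite[of "e / 3" r] e r by (simp add: power_less_top_ennreal)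
  finally show ?thesis .
qed

section \<open>Symmetric functions of configurations\<close>

definition symmetric_cfg :: "nat \<Rightarrow> (config \<Rightarrow> 'a) \<Rightarrow> bool" where
  "symmetric_cfg n \<Phi> \<longleftrightarrow> (\<forall>p x. p permutes {..<n} \<longrightarrow> x \<in> space (M n) \<longrightarrow> \<Phi> (x \<circ> p) = \<Phi> x)"

definition field_energy :: "nat \<Rightarrow> config \<Rightarrow> real" where
  "field_energy n y = (\<Sum>i<n. norm (y i))"

text \<open>The number of bosons of momentum at least \<open>1\<close>; only these are created by \<open>B\<close>.\<close>

definition hard_count :: "nat \<Rightarrow> config \<Rightarrow> real" where
  "hard_count n y = (\<Sum>i<n. if 1 \<le> norm (y i) then 1 else 0)"

lemma field_energy_nonneg: "0 \<le> field_energy n y"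
  unfolding field_energy_def by (intro sum_nonneg) auto

lemma hard_count_nonneg: "0 \<le> hard_count n y"
  unfolding hard_count_def by (intro sum_nonneg) auto

lemma hard_count_le_field_energy: "hard_count n y \<le> field_energy n y"
  unfolding hard_count_def field_energy_def by (intro sum_mono) auto

lemma hard_count_kcons:
  "hard_count (Suc n) (kcons k x n) = (if 1 \<le> norm k then 1 else 0) + hard_count n x"
  by (simp add: hard_count_def sum.lessThan_Suc_shift del: sum.lessThan_Suc)

lemma hard_count_comp_permutes: "p permutes {..<n} \<Longrightarrow> hard_count n (y \<circ> p) = hard_count n y"
  unfolding hard_count_def
  using sum.permute[of p "{..<n}" "\<lambda>i. if 1 \<le> norm (y i) then 1 else (0::real)"] by (simp add: comp_def)

lemma borel_measurable_field_energy [measurable]: "field_energy n \<in> borel_measurable (M n)"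
  unfolding field_energy_def[abs_def] by (intro borel_measurable_sum) (simp add: borel_measurable_norm_cfg_component)

lemma borel_measurable_hard_count [measurable]: "hard_count n \<in> borel_measurable (M n)"
  unfolding hard_count_def[abs_def] by (intro borel_measurable_sum) measurable

lemma nn_integral_symmetric_comp_permutes:
  fixes \<Phi> h :: "config \<Rightarrow> ennreal"
  assumes "symmetric_cfg n \<Phi>" "\<Phi> \<in> borel_measurable (M n)" "h \<in> borel_measurable (M n)"
    and p: "p permutes {..<n}"
  shows "(\<integral>\<^sup>+y. \<Phi> y * h (y \<circ> p) \<partial>M n) = (\<integral>\<^sup>+y. \<Phi> y * h y \<partial>M n)"
proof -
  have "(\<integral>\<^sup>+y. \<Phi> y * h (y \<circ> p) \<partial>M n) = (\<integral>\<^sup>+y. \<Phi> (y \<circ> p) * h (y \<circ> p) \<partial>M n)"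
    using assms by (intro nn_integral_cong) (simp add: symmetric_cfg_def)
  also have "\<dots> = (\<integral>\<^sup>+y. \<Phi> y * h y \<partial>M n)"
    using assms by (intro nn_integral_cfg_comp_permutes[OF p, of "\<lambda>y. \<Phi> y * h y"]) simp
  finally show ?thesis .
qed

lemma nn_integral_symmetric_transpose:
  fixes \<Phi> h :: "config \<Rightarrow> ennreal"
  assumes "symmetric_cfg n \<Phi>" "\<Phi> \<in> borel_measurable (M n)" "h \<in> borel_measurable (M n)"
    and "i < n" "j < n"
  shows "(\<integral>\<^sup>+y. \<Phi> y * h (y \<circ> Transposition.transpose i j) \<partial>M n) = (\<integral>\<^sup>+y. \<Phi> y * h y \<partial>M n)"
  using assms by (intro nn_integral_symmetric_comp_permutes permutes_swap_id) auto

lemma nn_integral_field_energy_symmetric: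
  fixes \<Phi> :: "config \<Rightarrow> ennreal"
  assumes \<Phi>: "symmetric_cfg n \<Phi>" "\<Phi> \<in> borel_measurable (M n)"
  shows "(\<integral>\<^sup>+y. \<Phi> y * ennreal (field_energy n y) \<partial>M n)
    = of_nat n * (\<integral>\<^sup>+y. \<Phi> y * ennreal (norm (y 0)) \<partial>M n)"
proof -
  have "(\<integral>\<^sup>+y. \<Phi> y * ennreal (field_energy n y) \<partial>M n) = (\<integral>\<^sup>+y. (\<Sum>i<n. \<Phi> y * ennreal (norm (y i))) \<partial>M n)"
    unfolding field_energy_def
    by (intro nn_integral_cong) (simp add: sum_distrib_left sum_ennreal[symmetric] del: sum_ennreal)
  also have "\<dots> = (\<Sum>i<n. (\<integral>\<^sup>+y. \<Phi> y * ennreal (norm (y i)) \<partial>M n))"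
  proof (rule nn_integral_sum)
    fix i assume "i \<in> {..<n}"
    then have [measurable]: "(\<lambda>y. norm (y i)) \<in> borel_measurable (M n)"
      by simp
    show "(\<lambda>y. \<Phi> y * ennreal (norm (y i))) \<in> borel_measurable (M n)"
      using \<Phi> by measurable
  qed
  also have "\<dots> = (\<Sum>i<n. (\<integral>\<^sup>+y. \<Phi> y * ennreal (norm (y 0)) \<partial>M n))"
  proof (intro sum.cong refl)
    fix i assume "i \<in> {..<n}"
    then show "(\<integral>\<^sup>+y. \<Phi> y * ennreal (norm (y i)) \<partial>M n) = (\<integral>\<^sup>+y. \<Phi> y * ennreal (norm (y 0)) \<partial>M n)"
      using nn_integral_symmetric_transpose[OF \<Phi>, of "\<lambda>y. ennreal (norm (y 0))" 0 i]
      by (simp add: comp_def)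
  qed
  finally show ?thesis
    by simp
qed

definition pair_weight :: "nat \<Rightarrow> config \<Rightarrow> real" where
  "pair_weight n y =
     (if 1 \<le> norm (y 0) \<and> 1 \<le> norm (y 1) then (norm (y 0) + norm (y 1)) / hard_count n y else 0)"

text \<open>The share of \<open>|y 0|\<close> attributed to the hard pair \<open>(0, j)\<close>: for fixed \<open>y\<close> these shares
  sum to at most \<open>|y 0|\<close>, and by symmetry each of them has the same expectation.\<close>

definition pair_share :: "nat \<Rightarrow> nat \<Rightarrow> config \<Rightarrow> real" where
  "pair_share n j y = (if 1 \<le> norm (y 0) \<and> 1 \<le> norm (y j) then norm (y 0) / hard_count n y else 0)"

lemma pair_weight_nonneg: "0 \<le> pair_weight n y"
  using hard_count_nonneg by (simp add: pair_weight_def)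

lemma pair_share_nonneg: "0 \<le> pair_share n j y"
  using hard_count_nonneg by (simp add: pair_share_def)

lemma borel_measurable_pair_weight [measurable]:
  "1 < n \<Longrightarrow> pair_weight n \<in> borel_measurable (M n)"
  unfolding pair_weight_def[abs_def] by measurable

lemma borel_measurable_pair_share [measurable]:
  "j < n \<Longrightarrow> pair_share n j \<in> borel_measurable (M n)"
  unfolding pair_share_def[abs_def] by measurable

lemma pair_weight_eq:
  assumes "1 < n"
  shows "pair_weight n y = pair_share n 1 y + pair_share n 1 (y \<circ> Transposition.transpose 0 1)"
proof -
  have "hard_count n (y \<circ> Transposition.transpose 0 1) = hard_count n y"
    using assms by (intro hard_count_comp_permutes permutes_swap_id) auto
  then show ?thesis
    by (simp add: pair_weight_def pair_share_def add_divide_distrib)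
qed

lemma pair_share_comp_transpose:
  assumes "1 \<le> j" "j < n"
  shows "pair_share n 1 (y \<circ> Transposition.transpose 1 j) = pair_share n j y"
proof -
  have "hard_count n (y \<circ> Transposition.transpose 1 j) = hard_count n y"
    using assms by (intro hard_count_comp_permutes permutes_swap_id) auto
  then show ?thesis
    using assms by (auto simp: pair_share_def)
qed

lemma sum_pair_share_le: "(\<Sum>j\<in>{1..<n}. pair_share n j y) \<le> norm (y 0)"
proof (cases "1 \<le> norm (y 0) \<and> 0 < n")
  case True
  let ?S = "\<Sum>j\<in>{1..<n}. if 1 \<le> norm (y j) then 1 else (0::real)"
  have "{..<n} = insert 0 {1..<n}"
    using True by auto
  then have count: "hard_count n y = 1 + ?S"
    using True by (simp add: hard_count_def)
  have "(\<Sum>j\<in>{1..<n}. pair_share n j y) = (\<Sum>j\<in>{1..<n}. norm (y 0) * (if 1 \<le> norm (y j) then 1 else 0) / hard_count n y)"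
    using True by (intro sum.cong) (auto simp: pair_share_def)
  also have "\<dots> = norm (y 0) * ?S / hard_count n y"
    by (simp only: sum_divide_distrib[symmetric] sum_distrib_left[symmetric])
  also have "\<dots> \<le> norm (y 0)"
  proof -
    have "0 \<le> ?S"
      by (intro sum_nonneg) auto
    then show ?thesis
      using count by (simp add: divide_le_eq mult_left_mono)
  qed
  finally show ?thesis .
qed (auto simp: pair_share_def)

lemma nn_integral_pair_weight_eq:
  fixes \<Phi> :: "config \<Rightarrow> ennreal"
  assumes \<Phi>: "symmetric_cfg n \<Phi>" "\<Phi> \<in> borel_measurable (M n)" and n: "2 \<le> n"
  shows "(\<integral>\<^sup>+y. \<Phi> y * ennreal (pair_weight n y) \<partial>M n) = 2 * (\<integral>\<^sup>+y. \<Phi> y * ennreal (pair_share n 1 y) \<partial>M n)"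
proof -
  have [measurable]: "\<Phi> \<in> borel_measurable (M n)" "pair_share n 1 \<in> borel_measurable (M n)"
    using \<Phi> n by simp_all
  have [measurable]: "(\<lambda>y. y \<circ> Transposition.transpose 0 1) \<in> measurable (M n) (M n)"
    using n by (intro measurable_cfg_comp_permutes permutes_swap_id) auto
  have "(\<integral>\<^sup>+y. \<Phi> y * ennreal (pair_weight n y) \<partial>M n)
      = (\<integral>\<^sup>+y. \<Phi> y * ennreal (pair_share n 1 y)
           + \<Phi> y * ennreal (pair_share n 1 (y \<circ> Transposition.transpose 0 1)) \<partial>M n)"
    using n by (intro nn_integral_cong) (simp add: pair_weight_eq pair_share_nonneg distrib_left)
  also have "\<dots> = (\<integral>\<^sup>+y. \<Phi> y * ennreal (pair_share n 1 y) \<partial>M n)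
      + (\<integral>\<^sup>+y. \<Phi> y * ennreal (pair_share n 1 (y \<circ> Transposition.transpose 0 1)) \<partial>M n)"
    by (intro nn_integral_add) measurable
  finally show ?thesis
    using n nn_integral_symmetric_transpose[OF \<Phi>, of "\<lambda>y. ennreal (pair_share n 1 y)" 0 1]
    by (simp add: mult_2)
qed

lemma nn_integral_pair_share_le:
  fixes \<Phi> :: "config \<Rightarrow> ennreal"
  assumes \<Phi>: "symmetric_cfg n \<Phi>" "\<Phi> \<in> borel_measurable (M n)" and n: "2 \<le> n"
  shows "of_nat (n - 1) * (\<integral>\<^sup>+y. \<Phi> y * ennreal (pair_share n 1 y) \<partial>M n)
    \<le> (\<integral>\<^sup>+y. \<Phi> y * ennreal (norm (y 0)) \<partial>M n)"
proof -
  let ?I = "\<lambda>j. \<integral>\<^sup>+y. \<Phi> y * ennreal (pair_share n j y) \<partial>M n"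
  have [measurable]: "\<Phi> \<in> borel_measurable (M n)"
    using \<Phi> by simp
  have "?I j = ?I 1" if j: "j \<in> {1..<n}" for j
  proof -
    have "?I j = (\<integral>\<^sup>+y. \<Phi> y * ennreal (pair_share n 1 (y \<circ> Transposition.transpose 1 j)) \<partial>M n)"
      using j by (simp only: pair_share_comp_transpose atLeastLessThan_iff)
    also have "\<dots> = ?I 1"
      using j n by (intro nn_integral_symmetric_transpose[OF \<Phi>]) auto
    finally show ?thesis .
  qed
  then have "(\<Sum>j\<in>{1..<n}. ?I j) = (\<Sum>j\<in>{1..<n}. ?I 1)"
    by (rule sum.cong[OF refl])
  then have "of_nat (n - 1) * ?I 1 = (\<Sum>j\<in>{1..<n}. ?I j)"
    by simp
  also have "\<dots> = (\<integral>\<^sup>+y. \<Phi> y * ennreal (\<Sum>j\<in>{1..<n}. pair_share n j y) \<partial>M n)"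
    by (subst nn_integral_sum[symmetric])
      (auto simp: sum_distrib_left pair_share_nonneg sum_ennreal[symmetric] simp del: sum_ennreal)
  also have "\<dots> \<le> (\<integral>\<^sup>+y. \<Phi> y * ennreal (norm (y 0)) \<partial>M n)"
    by (intro nn_integral_mono mult_left_mono ennreal_leI sum_pair_share_le) simp
  finally show ?thesis .
qed

lemma nn_integral_pair_weight_le:
  fixes \<Phi> :: "config \<Rightarrow> ennreal"
  assumes \<Phi>: "symmetric_cfg n \<Phi>" "\<Phi> \<in> borel_measurable (M n)" and n: "2 \<le> n"
  shows "of_nat n * of_nat (n - 1) * (\<integral>\<^sup>+y. \<Phi> y * ennreal (pair_weight n y) \<partial>M n)
    \<le> 2 * (\<integral>\<^sup>+y. \<Phi> y * ennreal (field_energy n y) \<partial>M n)"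
proof -
  have "of_nat n * of_nat (n - 1) * (\<integral>\<^sup>+y. \<Phi> y * ennreal (pair_weight n y) \<partial>M n)
      = 2 * (of_nat n * (of_nat (n - 1) * (\<integral>\<^sup>+y. \<Phi> y * ennreal (pair_share n 1 y) \<partial>M n)))"
    by (simp add: nn_integral_pair_weight_eq[OF \<Phi> n] mult_ac)
  also have "\<dots> \<le> 2 * (of_nat n * (\<integral>\<^sup>+y. \<Phi> y * ennreal (norm (y 0)) \<partial>M n))"
    by (intro mult_left_mono nn_integral_pair_share_le[OF \<Phi> n]) auto
  also have "\<dots> = 2 * (\<integral>\<^sup>+y. \<Phi> y * ennreal (field_energy n y) \<partial>M n)"
    by (simp add: nn_integral_field_energy_symmetric[OF \<Phi>])
  finally show ?thesis .
qed

section \<open>Annihilation operators on symmetric sectors\<close>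

lemma ennreal_norm_integral_le:
  fixes f :: "'a \<Rightarrow> 'b::{banach, second_countable_topology}"
  shows "ennreal (norm (integral\<^sup>L N f)) \<le> (\<integral>\<^sup>+x. ennreal (norm (f x)) \<partial>N)"
  by (cases "integrable N f") (simp_all add: integral_norm_bound_ennreal not_integrable_integral_eq)

lemma nn_integral_mult_le_half_sum_squares:
  fixes f g :: "'a \<Rightarrow> ennreal"
  assumes [measurable]: "f \<in> borel_measurable N" "g \<in> borel_measurable N"
  shows "(\<integral>\<^sup>+x. f x * g x \<partial>N) \<le> ((\<integral>\<^sup>+x. f x ^ 2 \<partial>N) + (\<integral>\<^sup>+x. g x ^ 2 \<partial>N)) / 2"
proof -
  have "f x * g x \<le> (f x ^ 2 + g x ^ 2) / 2" for x
  proof -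
    have "2 * (f x * g x) \<le> f x ^ 2 + g x ^ 2"
      using sum_of_squares_ge_ennreal[of "f x" "g x"] by (simp add: mult.assoc)
    then have "2 * (f x * g x) / 2 \<le> (f x ^ 2 + g x ^ 2) / 2"
      by (rule divide_right_mono_ennreal)
    then show ?thesis
      by (simp add: ennreal_mult_divide_eq mult.commute[of 2])
  qed
  then have "(\<integral>\<^sup>+x. f x * g x \<partial>N) \<le> (\<integral>\<^sup>+x. (f x ^ 2 + g x ^ 2) / 2 \<partial>N)"
    by (intro nn_integral_mono)
  also have "\<dots> = ((\<integral>\<^sup>+x. f x ^ 2 \<partial>N) + (\<integral>\<^sup>+x. g x ^ 2 \<partial>N)) / 2"
    by (simp add: nn_integral_divide nn_integral_add)
  finally show ?thesis .
qed

lemma cmod_ann_le: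
  "ennreal (cmod (ann f \<psi> n x))
    \<le> ennreal (sqrt (real n + 1)) * (\<integral>\<^sup>+k. ennreal (cmod (f k) * cmod (\<psi> (Suc n) (kcons k x n))) \<partial>lborel)"
proof -
  have "ennreal (cmod (ann f \<psi> n x))
      = ennreal (sqrt (real n + 1)) * ennreal (cmod (\<integral>k. f k * \<psi> (Suc n) (kcons k x n) \<partial>lborel))"
    by (simp add: ann_def norm_mult ennreal_mult)
  also have "\<dots> \<le> ennreal (sqrt (real n + 1)) * (\<integral>\<^sup>+k. ennreal (cmod (f k * \<psi> (Suc n) (kcons k x n))) \<partial>lborel)"
    by (intro mult_left_mono ennreal_norm_integral_le) simp
  finally show ?thesis
    by (simp add: norm_mult)
qed

text \<open>The pointwise majorant of \<open>|(b(f) \<psi>)\<^sub>n|\<close> by a nonnegative coupling function \<open>F \<ge> |f|\<close>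
  and \<open>\<phi> = |\<psi>\<^sub>n\<^sub>+\<^sub>1|\<close>.\<close>

definition ann_majorant :: "(real^3 \<Rightarrow> real) \<Rightarrow> (config \<Rightarrow> real) \<Rightarrow> nat \<Rightarrow> config \<Rightarrow> ennreal" where
  "ann_majorant F \<phi> n x = ennreal (sqrt (real n + 1)) * (\<integral>\<^sup>+k. ennreal (F k * \<phi> (kcons k x n)) \<partial>lborel)"

lemma borel_measurable_ann_majorant [measurable]:
  assumes "F \<in> borel_measurable borel" "\<phi> \<in> borel_measurable (M (Suc n))"
  shows "ann_majorant F \<phi> n \<in> borel_measurable (M n)"
proof -
  have "(\<lambda>y. ennreal (F (y 0) * \<phi> y)) \<in> borel_measurable (M (Suc n))"
    using assms measurable_compose[OF measurable_cfg_component[of 0 "Suc n"], of F borel] by measurable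
  from borel_measurable_nn_integral_kcons[OF this]
  have [measurable]: "(\<lambda>x. \<integral>\<^sup>+k. ennreal (F k * \<phi> (kcons k x n)) \<partial>lborel) \<in> borel_measurable (M n)"
    by simp
  show ?thesis
    unfolding ann_majorant_def[abs_def] by measurable
qed

lemma cmod_ann_le_ann_majorant:
  assumes "\<And>k. cmod (f k) \<le> F k"
  shows "ennreal (cmod (ann f \<psi> n x)) \<le> ann_majorant F (\<lambda>y. cmod (\<psi> (Suc n) y)) n x"
  unfolding ann_majorant_def
  by (rule order_trans[OF cmod_ann_le])
    (intro mult_left_mono nn_integral_mono ennreal_leI mult_right_mono assms; simp)

lemma nn_integral_Cauchy_Schwarz_norm_weight:
  fixes F u :: "real^3 \<Rightarrow> real"
  assumes [measurable]: "F \<in> borel_measurable borel" "u \<in> borel_measurable lborel"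
    and F: "\<And>k. 0 \<le> F k" "F 0 = 0" and u: "\<And>k. 0 \<le> u k"
  shows "(\<integral>\<^sup>+k. ennreal (F k * u k) \<partial>lborel)^2
    \<le> (\<integral>\<^sup>+k. ennreal (F k^2 / norm k) \<partial>lborel) * (\<integral>\<^sup>+k. ennreal (u k^2) * ennreal (norm k) \<partial>lborel)"
proof -
  have "ennreal (F k * u k) = ennreal (F k / sqrt (norm k)) * ennreal (sqrt (norm k) * u k)" for k
    using F u by (cases "k = 0") (simp_all add: ennreal_mult'[symmetric])
  then have "(\<integral>\<^sup>+k. ennreal (F k * u k) \<partial>lborel)^2
      \<le> (\<integral>\<^sup>+k. ennreal (F k / sqrt (norm k)) ^ 2 \<partial>lborel) * (\<integral>\<^sup>+k. ennreal (sqrt (norm k) * u k) ^ 2 \<partial>lborel)"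
    by (simp only:) (rule Cauchy_Schwarz_nn_integral; measurable)
  also have "\<dots> = (\<integral>\<^sup>+k. ennreal (F k^2 / norm k) \<partial>lborel) * (\<integral>\<^sup>+k. ennreal (u k^2) * ennreal (norm k) \<partial>lborel)"
    using F u by (simp add: ennreal_power power_divide power_mult_distrib ennreal_mult'[symmetric] mult.commute)
  finally show ?thesis .
qed

text \<open>Cauchy-Schwarz with the weight \<open>|k|\<close> in the annihilated momentum, followed by the
  symmetry of \<open>\<phi>\<close>, which turns \<open>(n + 1) |k\<^sub>0|\<close> into the field energy.\<close>

lemma nn_integral_ann_majorant_sq_le:
  fixes F :: "real^3 \<Rightarrow> real" and \<phi> :: "config \<Rightarrow> real"
  assumes [measurable]: "F \<in> borel_measurable borel" and F: "\<And>k. 0 \<le> F k" "F 0 = 0"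
    and [measurable]: "\<phi> \<in> borel_measurable (M (Suc n))" and \<phi>: "\<And>y. 0 \<le> \<phi> y"
    and sym: "symmetric_cfg (Suc n) \<phi>"
  shows "(\<integral>\<^sup>+x. ann_majorant F \<phi> n x ^ 2 \<partial>M n)
    \<le> (\<integral>\<^sup>+k. ennreal (F k^2 / norm k) \<partial>lborel)
       * (\<integral>\<^sup>+y. ennreal (field_energy (Suc n) y * \<phi> y^2) \<partial>M (Suc n))"
proof -
  define C where "C = (\<integral>\<^sup>+k. ennreal (F k^2 / norm k) \<partial>(lborel :: (real^3) measure))"
  define h where "h y = ennreal (\<phi> y^2) * ennreal (norm (y 0))" for y :: config
  have [measurable]: "h \<in> borel_measurable (M (Suc n))"
    unfolding h_def by measurable
  have CS: "(\<integral>\<^sup>+k. ennreal (F k * \<phi> (kcons k x n)) \<partial>lborel)^2 \<le> C * (\<integral>\<^sup>+k. h (kcons k x n) \<partial>lborel)" for x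
    unfolding C_def h_def kcons_0 using F \<phi>
    by (intro nn_integral_Cauchy_Schwarz_norm_weight)
      (use measurable_compose[OF measurable_kcons_momentum \<open>\<phi> \<in> borel_measurable (M (Suc n))\<close>] in simp_all)
  have "(\<integral>\<^sup>+x. ann_majorant F \<phi> n x ^ 2 \<partial>M n)
      = of_nat (Suc n) * (\<integral>\<^sup>+x. (\<integral>\<^sup>+k. ennreal (F k * \<phi> (kcons k x n)) \<partial>lborel)^2 \<partial>M n)"
    by (simp add: ann_majorant_def power_mult_distrib ennreal_power ennreal_of_nat_eq_real_of_nat
        nn_integral_cmult add.commute)
  also have "\<dots> \<le> of_nat (Suc n) * (C * (\<integral>\<^sup>+x. (\<integral>\<^sup>+k. h (kcons k x n) \<partial>lborel) \<partial>M n))"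
    by (intro mult_left_mono order_trans[OF nn_integral_mono[OF CS]]) (simp_all add: nn_integral_cmult)
  also have "\<dots> = C * (of_nat (Suc n) * (\<integral>\<^sup>+y. h y \<partial>M (Suc n)))"
    by (simp add: nn_integral_cfg_Suc mult_ac)
  also have "of_nat (Suc n) * (\<integral>\<^sup>+y. h y \<partial>M (Suc n))
      = (\<integral>\<^sup>+y. ennreal (\<phi> y^2) * ennreal (field_energy (Suc n) y) \<partial>M (Suc n))"
    unfolding h_def using sym
    by (intro nn_integral_field_energy_symmetric[symmetric]) (simp_all add: symmetric_cfg_def)
  finally show ?thesis
    by (simp add: C_def ennreal_mult'[symmetric] field_energy_nonneg mult.commute)
qed


section \<open>The double annihilation operator\<close>

lemma mult_le_half_weighted_squares:
  fixes P A B a b :: real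
  assumes "0 \<le> A" "0 \<le> B" "0 \<le> a" "0 \<le> b" "0 \<le> P" "P^2 \<le> A * B"
  shows "P * a * b \<le> (A * a^2 + B * b^2) / 2"
proof -
  have "P * a * b \<le> sqrt A * sqrt B * a * b"
    using assms by (intro mult_right_mono) (auto simp: real_le_rsqrt real_sqrt_mult[symmetric])
  moreover have "2 * (sqrt A * a) * (sqrt B * b) \<le> (sqrt A * a)^2 + (sqrt B * b)^2"
    using power2_diff[of "sqrt A * a" "sqrt B * b"] zero_le_power2[of "sqrt A * a - sqrt B * b"] by linarith
  ultimately show ?thesis
    using assms by (simp add: power_mult_distrib mult_ac)
qed

text \<open>AM-GM with the weights \<open>A = |F k F k'|\<^sup>2 (M + 2)/(|k| + |k'|)\<close> and
  \<open>B = (n + 1)(n + 2) W\<close>, whose product is exactly \<open>(n + 1)(n + 2) |F k F k'|\<^sup>2\<close>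
  as soon as both momenta are hard.\<close>

lemma pair_amgm_pointwise:
  fixes F :: "real^3 \<Rightarrow> real" and a b :: real and k k' :: "real^3" and x :: config and n :: nat
  assumes F: "\<And>k. 0 \<le> F k" and hard: "\<And>k. F k \<noteq> 0 \<Longrightarrow> 1 \<le> norm k" and ab: "0 \<le> a" "0 \<le> b"
  defines "y \<equiv> kcons k' (kcons k x n) (Suc n)"
  shows "sqrt ((real n + 1) * (real n + 2)) * a * (F k * F k') * b
    \<le> F k^2 * F k'^2 / (norm k + norm k') * ((hard_count n x + 2) * a^2 / 2)
      + (real n + 1) * (real n + 2) * pair_weight (Suc (Suc n)) y * b^2 / 2"
proof (cases "F k = 0 \<or> F k' = 0")
  case True
  then show ?thesis
    using ab pair_weight_nonneg[of "Suc (Suc n)" y] hard_count_nonneg[of n x] by auto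
next
  case False
  then have hk: "1 \<le> norm k" "1 \<le> norm k'"
    using hard by auto
  have M: "0 < hard_count n x + 2"
    using hard_count_nonneg[of n x] by simp
  have W: "pair_weight (Suc (Suc n)) y = (norm k' + norm k) / (hard_count n x + 2)"
    using hk by (simp add: pair_weight_def y_def hard_count_kcons)
  let ?A = "F k^2 * F k'^2 / (norm k + norm k') * (hard_count n x + 2)"
  let ?B = "(real n + 1) * (real n + 2) * pair_weight (Suc (Suc n)) y"
  have "norm k + norm k' \<noteq> 0"
    using hk by linarith
  moreover have "?A * ?B = (real n + 1) * (real n + 2) * (F k^2 * F k'^2)
      * ((norm k + norm k') / (norm k + norm k')) * ((hard_count n x + 2) / (hard_count n x + 2))"
    by (simp add: W add.commute mult_ac)
  ultimately have "?A * ?B = (real n + 1) * (real n + 2) * (F k * F k')^2"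
    using M by (simp add: power_mult_distrib)
  then have "sqrt ((real n + 1) * (real n + 2)) * (F k * F k') * a * b \<le> (?A * a^2 + ?B * b^2) / 2"
    using F ab hk M by (intro mult_le_half_weighted_squares) (auto simp: W power_mult_distrib)
  then show ?thesis
    by (simp add: add_divide_distrib mult_ac)
qed

lemma nn_integral_pair_weight_term_le:
  fixes \<phi> :: "config \<Rightarrow> real"
  assumes [measurable]: "\<phi> \<in> borel_measurable (M (Suc (Suc n)))"
    and sym: "symmetric_cfg (Suc (Suc n)) \<phi>"
  shows "(\<integral>\<^sup>+y. ennreal ((real n + 1) * (real n + 2) * pair_weight (Suc (Suc n)) y * \<phi> y^2 / 2) \<partial>M (Suc (Suc n)))
    \<le> (\<integral>\<^sup>+y. ennreal (field_energy (Suc (Suc n)) y * \<phi> y^2) \<partial>M (Suc (Suc n)))"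
proof -
  let ?N = "Suc (Suc n)"
  define \<Phi> where "\<Phi> y = ennreal (\<phi> y^2)" for y
  have \<Phi>: "symmetric_cfg ?N \<Phi>" "\<Phi> \<in> borel_measurable (M ?N)"
    using sym unfolding \<Phi>_def symmetric_cfg_def by auto measurable
  note [measurable] = \<Phi>(2) borel_measurable_pair_weight[of ?N]
  have "(of_nat ?N * of_nat (?N - 1) :: ennreal) = of_nat (?N * (?N - 1))"
    by (rule of_nat_mult[symmetric])
  also have "\<dots> = ennreal ((real n + 1) * (real n + 2))"
    by (simp add: ennreal_of_nat_eq_real_of_nat algebra_simps)
  finally have c: "ennreal ((real n + 1) * (real n + 2) / 2) = of_nat ?N * of_nat (?N - 1) / 2"
    by (simp add: divide_ennreal[symmetric])
  have "(\<integral>\<^sup>+y. ennreal ((real n + 1) * (real n + 2) * pair_weight ?N y * \<phi> y^2 / 2) \<partial>M ?N)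
      = (\<integral>\<^sup>+y. ennreal ((real n + 1) * (real n + 2) / 2) * (\<Phi> y * ennreal (pair_weight ?N y)) \<partial>M ?N)"
    by (intro nn_integral_cong)
      (simp add: \<Phi>_def pair_weight_nonneg ennreal_mult'[symmetric] ennreal_mult''[symmetric] mult_ac)
  also have "\<dots> = ennreal ((real n + 1) * (real n + 2) / 2) * (\<integral>\<^sup>+y. \<Phi> y * ennreal (pair_weight ?N y) \<partial>M ?N)"
    by (rule nn_integral_cmult) measurable
  also have "\<dots> = of_nat ?N * of_nat (?N - 1) * (\<integral>\<^sup>+y. \<Phi> y * ennreal (pair_weight ?N y) \<partial>M ?N) / 2"
    unfolding c by (simp add: ennreal_times_divide mult_ac)
  also have "\<dots> \<le> 2 * (\<integral>\<^sup>+y. \<Phi> y * ennreal (field_energy ?N y) \<partial>M ?N) / 2"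
    by (intro divide_right_mono_ennreal nn_integral_pair_weight_le[OF \<Phi>]) simp
  also have "\<dots> = (\<integral>\<^sup>+y. \<Phi> y * ennreal (field_energy ?N y) \<partial>M ?N)"
    by (simp add: ennreal_mult_divide_eq mult.commute[of 2])
  also have "\<dots> = (\<integral>\<^sup>+y. ennreal (field_energy ?N y * \<phi> y^2) \<partial>M ?N)"
    by (intro nn_integral_cong) (simp add: \<Phi>_def ennreal_mult'[symmetric] field_energy_nonneg mult.commute)
  finally show ?thesis .
qed

lemma nn_integral_kernel_add_cfg_Suc_Suc:
  fixes G :: "real^3 \<Rightarrow> real^3 \<Rightarrow> ennreal" and c :: "config \<Rightarrow> ennreal" and Q :: "config \<Rightarrow> ennreal"
  assumes [measurable]: "case_prod G \<in> borel_measurable (lborel \<Otimes>\<^sub>M lborel)"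
    "c \<in> borel_measurable (M n)" "Q \<in> borel_measurable (M (Suc (Suc n)))"
  shows "(\<integral>\<^sup>+x. (\<integral>\<^sup>+k. (\<integral>\<^sup>+k'. G k k' * c x + Q (kcons k' (kcons k x n) (Suc n)) \<partial>lborel) \<partial>lborel) \<partial>M n)
    = (\<integral>\<^sup>+k. (\<integral>\<^sup>+k'. G k k' \<partial>lborel) \<partial>lborel) * (\<integral>\<^sup>+x. c x \<partial>M n) + (\<integral>\<^sup>+y. Q y \<partial>M (Suc (Suc n)))"
proof -
  let ?Q = "\<lambda>x k. \<integral>\<^sup>+k'. Q (kcons k' (kcons k x n) (Suc n)) \<partial>lborel"
  have Q1: "(\<lambda>z. \<integral>\<^sup>+k'. Q (kcons k' z (Suc n)) \<partial>lborel) \<in> borel_measurable (M (Suc n))"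
    by (rule borel_measurable_nn_integral_kcons) simp
  have [measurable]: "(\<lambda>k'. Q (kcons k' z (Suc n))) \<in> borel_measurable lborel" for z
    using measurable_compose[OF measurable_kcons_momentum, of Q] by simp
  have [measurable]: "?Q x \<in> borel_measurable lborel" for x
    using measurable_compose[OF measurable_kcons_momentum Q1] by simp
  have [measurable]: "(\<lambda>x. \<integral>\<^sup>+k. ?Q x k \<partial>lborel) \<in> borel_measurable (M n)"
    using borel_measurable_nn_integral_kcons[OF Q1] by simp
  have inner: "(\<integral>\<^sup>+k'. G k k' * c x + Q (kcons k' (kcons k x n) (Suc n)) \<partial>lborel)
      = (\<integral>\<^sup>+k'. G k k' \<partial>lborel) * c x + ?Q x k" for x k
    by (subst nn_integral_add, measurable, subst nn_integral_multc, measurable)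
  have "(\<integral>\<^sup>+k. (\<integral>\<^sup>+k'. G k k' * c x + Q (kcons k' (kcons k x n) (Suc n)) \<partial>lborel) \<partial>lborel)
      = (\<integral>\<^sup>+k. (\<integral>\<^sup>+k'. G k k' \<partial>lborel) \<partial>lborel) * c x + (\<integral>\<^sup>+k. ?Q x k \<partial>lborel)" for x
    unfolding inner by (subst nn_integral_add, measurable, subst nn_integral_multc, measurable)
  then have "(\<integral>\<^sup>+x. (\<integral>\<^sup>+k. (\<integral>\<^sup>+k'. G k k' * c x + Q (kcons k' (kcons k x n) (Suc n)) \<partial>lborel) \<partial>lborel) \<partial>M n)
      = (\<integral>\<^sup>+k. (\<integral>\<^sup>+k'. G k k' \<partial>lborel) \<partial>lborel) * (\<integral>\<^sup>+x. c x \<partial>M n) + (\<integral>\<^sup>+x. (\<integral>\<^sup>+k. ?Q x k \<partial>lborel) \<partial>M n)"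
    by (simp only:) (subst nn_integral_add, measurable, subst nn_integral_cmult, measurable)
  then show ?thesis
    by (simp add: nn_integral_cfg_Suc_Suc)
qed

lemma ennreal_le_mult_add:
  fixes p x y z :: real
  assumes "p \<le> x * y + z" "0 \<le> x" "0 \<le> y" "0 \<le> z"
  shows "ennreal p \<le> ennreal x * ennreal y + ennreal z"
  using assms by (simp add: ennreal_mult'[symmetric] ennreal_plus[symmetric] ennreal_leI del: ennreal_plus)

text \<open>The pair kernel \<open>|F k F k'|\<^sup>2/(|k| + |k'|)\<close> is integrable, while the remaining
  factor \<open>(M + 2) |\<phi>\<^sub>a|\<^sup>2\<close> is dominated by \<open>H\<^sup>f + 2\<close> on the lower sector.\<close>

lemma nn_integral_double_annihilation_le:
  fixes F :: "real^3 \<Rightarrow> real" and \<phi>a \<phi>b :: "config \<Rightarrow> real"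
  assumes [measurable]: "F \<in> borel_measurable borel"
    and F: "\<And>k. 0 \<le> F k" and hard: "\<And>k. F k \<noteq> 0 \<Longrightarrow> 1 \<le> norm k"
    and [measurable]: "\<phi>a \<in> borel_measurable (M n)" and \<phi>a: "\<And>x. 0 \<le> \<phi>a x"
    and [measurable]: "\<phi>b \<in> borel_measurable (M (Suc (Suc n)))" and \<phi>b: "\<And>y. 0 \<le> \<phi>b y"
    and sym: "symmetric_cfg (Suc (Suc n)) \<phi>b"
  shows "(\<integral>\<^sup>+x. (\<integral>\<^sup>+k. (\<integral>\<^sup>+k'. ennreal (sqrt ((real n + 1) * (real n + 2)) * \<phi>a x * (F k * F k')
             * \<phi>b (kcons k' (kcons k x n) (Suc n))) \<partial>lborel) \<partial>lborel) \<partial>M n)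
    \<le> (\<integral>\<^sup>+k. (\<integral>\<^sup>+k'. ennreal (F k^2 * F k'^2 / (norm k + norm k')) \<partial>lborel) \<partial>lborel)
        * (\<integral>\<^sup>+x. ennreal ((hard_count n x + 2) * \<phi>a x^2 / 2) \<partial>M n)
      + (\<integral>\<^sup>+y. ennreal (field_energy (Suc (Suc n)) y * \<phi>b y^2) \<partial>M (Suc (Suc n)))"
proof -
  define G where "G k k' = ennreal (F k^2 * F k'^2 / (norm k + norm k'))" for k k' :: "real^3"
  define c where "c x = ennreal ((hard_count n x + 2) * \<phi>a x^2 / 2)" for x
  define Q where "Q y = ennreal ((real n + 1) * (real n + 2) * pair_weight (Suc (Suc n)) y * \<phi>b y^2 / 2)" for y
  have [measurable]: "case_prod G \<in> borel_measurable (lborel \<Otimes>\<^sub>M lborel)" "c \<in> borel_measurable (M n)"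
    unfolding G_def c_def by measurable
  have [measurable]: "Q \<in> borel_measurable (M (Suc (Suc n)))"
    unfolding Q_def by measurable
  have "ennreal (sqrt ((real n + 1) * (real n + 2)) * \<phi>a x * (F k * F k') * \<phi>b (kcons k' (kcons k x n) (Suc n)))
      \<le> G k k' * c x + Q (kcons k' (kcons k x n) (Suc n))" for x k k'
    unfolding G_def c_def Q_def
    using hard_count_nonneg[of n x] pair_weight_nonneg[of "Suc (Suc n)" "kcons k' (kcons k x n) (Suc n)"]
    by (intro ennreal_le_mult_add pair_amgm_pointwise F hard \<phi>a \<phi>b) simp_all
  then have "(\<integral>\<^sup>+x. (\<integral>\<^sup>+k. (\<integral>\<^sup>+k'. ennreal (sqrt ((real n + 1) * (real n + 2)) * \<phi>a x * (F k * F k')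
             * \<phi>b (kcons k' (kcons k x n) (Suc n))) \<partial>lborel) \<partial>lborel) \<partial>M n)
      \<le> (\<integral>\<^sup>+x. (\<integral>\<^sup>+k. (\<integral>\<^sup>+k'. G k k' * c x + Q (kcons k' (kcons k x n) (Suc n)) \<partial>lborel) \<partial>lborel) \<partial>M n)"
    by (intro nn_integral_mono)
  also have "\<dots> = (\<integral>\<^sup>+k. (\<integral>\<^sup>+k'. G k k' \<partial>lborel) \<partial>lborel) * (\<integral>\<^sup>+x. c x \<partial>M n) + (\<integral>\<^sup>+y. Q y \<partial>M (Suc (Suc n)))"
    by (rule nn_integral_kernel_add_cfg_Suc_Suc) measurable
  also have "\<dots> \<le> (\<integral>\<^sup>+k. (\<integral>\<^sup>+k'. G k k' \<partial>lborel) \<partial>lborel) * (\<integral>\<^sup>+x. c x \<partial>M n)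
      + (\<integral>\<^sup>+y. ennreal (field_energy (Suc (Suc n)) y * \<phi>b y^2) \<partial>M (Suc (Suc n)))"
    unfolding Q_def by (intro add_mono order_refl nn_integral_pair_weight_term_le sym) simp
  finally show ?thesis
    by (simp add: G_def c_def)
qed


section \<open>The coupling functions\<close>

definition fB_majorant :: "real^3 \<Rightarrow> real" where
  "fB_majorant k = (if 1 \<le> norm k then 2 * norm k powr (-3/2) else 0)"

lemma fB_majorant_nonneg: "0 \<le> fB_majorant k"
  by (simp add: fB_majorant_def)

lemma fB_majorant_hard: "fB_majorant k \<noteq> 0 \<Longrightarrow> 1 \<le> norm k"
  by (simp add: fB_majorant_def split: if_splits)

lemma borel_measurable_fB_majorant [measurable]: "fB_majorant \<in> borel_measurable borel"
  unfolding fB_majorant_def[abs_def] by measurable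

lemma rho_nonneg: "0 \<le> rho k"
  by (simp add: rho_def)

lemma rho_le: "k \<noteq> 0 \<Longrightarrow> rho k \<le> norm k powr (-1/2)"
proof -
  assume k: "k \<noteq> 0"
  have "(2 * pi) powr (-3/2) \<le> 1 powr (-3/2)"
    using pi_gt3 by (intro powr_mono2') auto
  moreover have "(2 * norm k) powr (-1/2) \<le> norm k powr (-1/2)"
    using k by (intro powr_mono2') auto
  ultimately have "rho k \<le> 1 * norm k powr (-1/2)"
    unfolding rho_def by (intro mult_mono) auto
  then show ?thesis
    by simp
qed

lemma cmod_fB_le:
  assumes kappa: "1 < kappa"
  shows "cmod (fB g kappa s j k) \<le> \<bar>g\<bar> * fB_majorant k"
proof (cases "kappa \<le> norm k \<and> norm k < s")
  case True
  then have k: "1 \<le> norm k"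
    using kappa by simp
  then have nk: "0 < norm k"
    by linarith
  have "cmod (fB g kappa s j k) = \<bar>k $ j * betaG g k\<bar>"
    unfolding fB_def by (subst if_P[OF True]) (rule norm_of_real)
  also have "\<dots> = \<bar>k $ j\<bar> * (\<bar>g\<bar> * rho k / (1/2 * (norm k)^2 + norm k))"
    using nk rho_nonneg[of k] add_pos_nonneg[of "norm k" "1/2 * (norm k)^2"]
    by (simp add: betaG_def abs_mult abs_divide add.commute)
  also have "\<dots> \<le> norm k * (\<bar>g\<bar> * norm k powr (-1/2) / (1/2 * (norm k)^2))"
    using nk rho_le[of k] rho_nonneg[of k] component_le_norm_cart[of k j]
    by (intro mult_mono divide_mono mult_left_mono) auto
  also have "\<dots> = \<bar>g\<bar> * (2 * (norm k * norm k powr (-1/2) / (norm k)^2))"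
    by (simp add: field_simps)
  also have "norm k * norm k powr (-1/2) / (norm k)^2 = norm k powr (-3/2)"
    using nk powr_add[of "norm k" 1 "-1/2"] powr_add[of "norm k" "-3/2" 2]
    by (simp add: powr_numeral field_simps)
  finally show ?thesis
    using k by (simp add: fB_majorant_def)
qed (auto simp: fB_def fB_majorant_def)

lemma borel_measurable_cmod_fPhi [measurable]: "(\<lambda>k. cmod (fPhi tau Lam k)) \<in> borel_measurable borel"
  unfolding fPhi_def[abs_def] rho_def[abs_def] by measurable

lemma nn_integral_fB_majorant_finite:
  "(\<integral>\<^sup>+k. ennreal (fB_majorant k^2 / norm k) \<partial>lborel) < \<infinity>"
proof -
  have "fB_majorant k^2 / norm k = 4 * (indicator {k. 1 \<le> norm k} k * norm k powr (-4))" for k :: "real^3"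
  proof (cases "1 \<le> norm k")
    case True
    then have nk: "0 < norm k"
      by linarith
    have "(norm k powr (-3/2))^2 = norm k powr (-4) * norm k"
      using nk powr_add[of "norm k" "-4" 1] by (simp add: power2_eq_square powr_add[symmetric])
    then show ?thesis
      using True nk by (simp add: fB_majorant_def power_mult_distrib)
  qed (simp add: fB_majorant_def)
  then have "(\<integral>\<^sup>+k. ennreal (fB_majorant k^2 / norm k) \<partial>lborel)
      = (\<integral>\<^sup>+k. ennreal 4 * ennreal (indicator {k. 1 \<le> norm k} k * norm k powr (-4)) \<partial>(lborel :: (real^3) measure))"
    by (simp add: ennreal_mult'')
  also have "\<dots> = ennreal 4 * (\<integral>\<^sup>+k. ennreal (indicator {k. 1 \<le> norm k} k * norm k powr (-4)) \<partial>(lborel :: (real^3) measure))"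
    by (rule nn_integral_cmult) measurable
  also have "\<dots> < \<infinity>"
    using nn_integral_norm_powr_tail_finite[of "-4"] by (simp add: ennreal_mult_less_top)
  finally show ?thesis .
qed

lemma fB_majorant_pair_kernel_le:
  fixes a b :: real
  assumes a: "1 \<le> a" and b: "1 \<le> b"
  shows "(2 * a powr (-3/2))^2 * (2 * b powr (-3/2))^2 / (a + b) \<le> 16 * (a powr (-7/2) * b powr (-7/2))"
proof -
  have sq: "(2 * x powr (-3/2))^2 = 4 * (x powr (-7/2) * sqrt x)" if "0 < x" for x :: real
  proof -
    have "(2 * x powr (-3/2))^2 = 4 * x powr (-3)"
      using that by (simp add: power2_eq_square powr_add[symmetric])
    moreover have "x powr (-3) = x powr (-7/2) * x powr (1/2)"
      using that powr_add[of x "-7/2" "1/2"] by simp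
    ultimately show ?thesis
      using that by (simp add: powr_half_sqrt)
  qed
  have "sqrt a * sqrt b \<le> (a + b) / 2"
    using a b arith_geo_mean_sqrt[of a b] by (simp add: real_sqrt_mult)
  then have le1: "sqrt a * sqrt b / (a + b) \<le> 1"
    using a b by simp
  have "(2 * a powr (-3/2))^2 * (2 * b powr (-3/2))^2 / (a + b)
      = 16 * (a powr (-7/2) * b powr (-7/2)) * (sqrt a * sqrt b / (a + b))"
    using a b unfolding sq[of a, OF order_less_le_trans[OF zero_less_one a]]
      sq[of b, OF order_less_le_trans[OF zero_less_one b]] by (simp add: field_simps)
  also have "\<dots> \<le> 16 * (a powr (-7/2) * b powr (-7/2)) * 1"
    using le1 by (intro mult_left_mono) auto
  finally show ?thesis
    by simp
qed

lemma nn_integral_fB_majorant_pair_finite: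
  "(\<integral>\<^sup>+k. (\<integral>\<^sup>+k'. ennreal (fB_majorant k^2 * fB_majorant k'^2 / (norm k + norm k')) \<partial>lborel) \<partial>lborel) < \<infinity>"
proof -
  define u where "u k = ennreal (indicator {k. 1 \<le> norm k} k * norm k powr (-7/2))" for k :: "real^3"
  have [measurable]: "u \<in> borel_measurable lborel"
    unfolding u_def[abs_def] by measurable
  have "ennreal (fB_majorant k^2 * fB_majorant k'^2 / (norm k + norm k')) \<le> ennreal 16 * u k * u k'"
    for k k' :: "real^3"
  proof (cases "1 \<le> norm k \<and> 1 \<le> norm k'")
    case True
    then have "ennreal (fB_majorant k^2 * fB_majorant k'^2 / (norm k + norm k'))
        \<le> ennreal (16 * (norm k powr (-7/2) * norm k' powr (-7/2)))"
      using fB_majorant_pair_kernel_le[of "norm k" "norm k'"] by (intro ennreal_leI) (simp add: fB_majorant_def)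
    also have "\<dots> = ennreal 16 * u k * u k'"
      using True by (simp add: u_def ennreal_mult mult.assoc)
    finally show ?thesis .
  qed (auto simp: fB_majorant_def)
  then have "(\<integral>\<^sup>+k. (\<integral>\<^sup>+k'. ennreal (fB_majorant k^2 * fB_majorant k'^2 / (norm k + norm k')) \<partial>lborel) \<partial>lborel)
      \<le> (\<integral>\<^sup>+k. (\<integral>\<^sup>+k'. ennreal 16 * u k * u k' \<partial>lborel) \<partial>lborel)"
    by (intro nn_integral_mono)
  also have "\<dots> = (\<integral>\<^sup>+k. ennreal 16 * u k * (\<integral>\<^sup>+k'. u k' \<partial>lborel) \<partial>lborel)"
    by (intro nn_integral_cong nn_integral_cmult) measurable
  also have "\<dots> = ennreal 16 * (\<integral>\<^sup>+k. u k \<partial>lborel) * (\<integral>\<^sup>+k'. u k' \<partial>lborel)"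
    by (subst nn_integral_multc) (measurable, subst nn_integral_cmult, measurable)
  also have "\<dots> < \<infinity>"
    using nn_integral_norm_powr_tail_finite[of "-7/2"] unfolding u_def by (simp add: ennreal_mult_less_top)
  finally show ?thesis .
qed

lemma nn_integral_fPhi_le:
  assumes tau: "0 < tau" and Lam: "Lam \<le> 2"
  shows "(\<integral>\<^sup>+k. ennreal ((cmod (fPhi tau Lam k))^2 / norm k) \<partial>lborel)
    \<le> (\<integral>\<^sup>+k. ennreal (indicator {k. 0 < norm k \<and> norm k < 2} k * norm k powr (-2)) \<partial>(lborel :: (real^3) measure))"
proof (intro nn_integral_mono ennreal_leI)
  fix k :: "real^3"
  show "(cmod (fPhi tau Lam k))^2 / norm k \<le> indicator {k. 0 < norm k \<and> norm k < 2} k * norm k powr (-2)"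
  proof (cases "tau \<le> norm k \<and> norm k < Lam")
    case True
    then have nk: "0 < norm k" "norm k < 2"
      using tau Lam by auto
    have "(cmod (fPhi tau Lam k))^2 / norm k \<le> (norm k powr (-1/2))^2 / norm k"
      using True nk rho_le[of k] rho_nonneg[of k] by (intro divide_right_mono power_mono) (auto simp: fPhi_def)
    also have "\<dots> = norm k powr (-2)"
      using nk by (simp add: power2_eq_square powr_add[symmetric] powr_diff[symmetric] powr_minus_divide)
    finally show ?thesis
      using nk by simp
  qed (auto simp: fPhi_def)
qed


section \<open>Sector estimates\<close>

lemma fock_vec_measurable [measurable]:
  assumes "fock_vec \<psi>"
  shows "(\<lambda>x. cmod (\<psi> n x)) \<in> borel_measurable (M n)"
proof -
  have [measurable]: "\<psi> n \<in> borel_measurable (M n)"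
    using assms by (simp add: fock_vec_def)
  show ?thesis
    by measurable
qed

lemma fock_vec_symmetric: "fock_vec \<psi> \<Longrightarrow> symmetric_cfg n (\<lambda>x. cmod (\<psi> n x))"
  by (simp add: fock_vec_def symmetric_cfg_def)

lemma fock_normsq_nonneg: "fock_vec \<psi> \<Longrightarrow> 0 \<le> fock_normsq \<psi>"
  unfolding fock_normsq_def fock_vec_def by (intro suminf_nonneg) auto

definition sector_normsq :: "fock \<Rightarrow> nat \<Rightarrow> ennreal" where
  "sector_normsq \<psi> n = (\<integral>\<^sup>+x. ennreal ((cmod (\<psi> n x))^2) \<partial>M n)"

lemma suminf_sector_normsq:
  assumes "fock_vec \<psi>"
  shows "(\<Sum>n. sector_normsq \<psi> n) = ennreal (fock_normsq \<psi>)"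
proof -
  have "integrable (M n) (\<lambda>x. (cmod (\<psi> n x))\<^sup>2)" for n
    using assms by (simp add: fock_vec_def)
  then have "(\<Sum>n. \<integral>\<^sup>+x. ennreal ((cmod (\<psi> n x))^2) \<partial>M n) = (\<Sum>n. ennreal (\<integral>x. (cmod (\<psi> n x))\<^sup>2 \<partial>M n))"
    by (simp add: nn_integral_eq_integral)
  also have "\<dots> = ennreal (fock_normsq \<psi>)"
    using assms unfolding fock_vec_def fock_normsq_def by (intro suminf_ennreal2) auto
  finally show ?thesis
    by (simp add: sector_normsq_def)
qed

lemma ennreal_suminf_shift_le: "(\<Sum>n. f (n + k)) \<le> (\<Sum>n. f n :: ennreal)"
  using suminf_offset[of f k] by simp

definition H0_sector :: "real^3 \<Rightarrow> fock \<Rightarrow> nat \<Rightarrow> ennreal" where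
  "H0_sector P \<psi> n = (\<integral>\<^sup>+ x. ennreal ((1/2 * (norm (P - Pf n x))\<^sup>2 + (\<Sum>i<n. norm (x i))) * (cmod (\<psi> n x))\<^sup>2) \<partial>M n)"

lemma H0_form_eq_suminf: "H0_form P \<psi> = (\<Sum>n. H0_sector P \<psi> n)"
  by (simp add: H0_form_def H0_sector_def)

lemma borel_measurable_Pf [measurable]: "Pf n \<in> borel_measurable (M n)"
proof -
  have "(\<lambda>x. x i) \<in> borel_measurable (M n)" if "i \<in> {..<n}" for i
    using that measurable_cfg_component[of i n] by simp
  then show ?thesis
    unfolding Pf_def[abs_def] by (rule borel_measurable_sum)
qed

lemma field_energy_le_H0_sector:
  "(\<integral>\<^sup>+x. ennreal (field_energy n x * (cmod (\<psi> n x))^2) \<partial>M n) \<le> H0_sector P \<psi> n"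
  unfolding H0_sector_def field_energy_def by (intro nn_integral_mono ennreal_leI mult_right_mono) auto

lemma kinetic_le_H0_sector:
  assumes "fock_vec \<psi>"
  shows "(\<integral>\<^sup>+x. ennreal ((norm (P - Pf n x))^2 * (cmod (\<psi> n x))^2) \<partial>M n) \<le> 2 * H0_sector P \<psi> n"
proof -
  have "ennreal ((norm (P - Pf n x))^2 * (cmod (\<psi> n x))^2)
      \<le> 2 * ennreal ((1/2 * (norm (P - Pf n x))\<^sup>2 + (\<Sum>i<n. norm (x i))) * (cmod (\<psi> n x))\<^sup>2)" for x
  proof -
    have "(norm (P - Pf n x))^2 * (cmod (\<psi> n x))^2
        \<le> 2 * ((1/2 * (norm (P - Pf n x))\<^sup>2 + (\<Sum>i<n. norm (x i))) * (cmod (\<psi> n x))\<^sup>2)"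
      using sum_nonneg[of "{..<n}" "\<lambda>i. norm (x i)"] by (simp add: algebra_simps)
    then have "ennreal ((norm (P - Pf n x))^2 * (cmod (\<psi> n x))^2)
        \<le> ennreal (2 * ((1/2 * (norm (P - Pf n x))\<^sup>2 + (\<Sum>i<n. norm (x i))) * (cmod (\<psi> n x))\<^sup>2))"
      by (rule ennreal_leI)
    then show ?thesis
      by (simp only: ennreal_mult'[of 2] ennreal_numeral)
  qed
  then have "(\<integral>\<^sup>+x. ennreal ((norm (P - Pf n x))^2 * (cmod (\<psi> n x))^2) \<partial>M n)
      \<le> (\<integral>\<^sup>+x. 2 * ennreal ((1/2 * (norm (P - Pf n x))\<^sup>2 + (\<Sum>i<n. norm (x i))) * (cmod (\<psi> n x))\<^sup>2) \<partial>M n)"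
    by (intro nn_integral_mono)
  also have "\<dots> = 2 * H0_sector P \<psi> n"
    unfolding H0_sector_def using assms by (intro nn_integral_cmult) measurable
  finally show ?thesis .
qed

definition coupling_norm :: "(real^3 \<Rightarrow> real) \<Rightarrow> ennreal" where
  "coupling_norm F = (\<integral>\<^sup>+k. ennreal (F k^2 / norm k) \<partial>lborel)"

lemma coupling_norm_scale:
  assumes "F \<in> borel_measurable borel"
  shows "coupling_norm (\<lambda>k. c * F k) = ennreal (c^2) * coupling_norm F"
proof -
  have "ennreal ((c * F k)^2 / norm k) = ennreal (c^2) * ennreal (F k^2 / norm k)" for k
    by (simp add: power_mult_distrib ennreal_mult'[symmetric])
  then show ?thesis
    unfolding coupling_norm_def using assms by (simp add: nn_integral_cmult)
qed

lemma ann_majorant_scale: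
  assumes "0 \<le> c" and [measurable]: "F \<in> borel_measurable borel" "\<phi> \<in> borel_measurable (M (Suc n))"
  shows "ann_majorant (\<lambda>k. c * F k) \<phi> n x = ennreal c * ann_majorant F \<phi> n x"
proof -
  have "(\<integral>\<^sup>+k. ennreal (c * F k * \<phi> (kcons k x n)) \<partial>lborel)
      = (\<integral>\<^sup>+k. ennreal c * ennreal (F k * \<phi> (kcons k x n)) \<partial>lborel)"
    using assms(1) by (simp add: ennreal_mult' mult.assoc)
  also have "\<dots> = ennreal c * (\<integral>\<^sup>+k. ennreal (F k * \<phi> (kcons k x n)) \<partial>lborel)"
    by (rule nn_integral_cmult) measurable
  finally show ?thesis
    by (simp add: ann_majorant_def mult.left_commute)
qed

locale coupling_majorant =
  fixes F :: "real^3 \<Rightarrow> real"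
  assumes measurable [measurable]: "F \<in> borel_measurable borel"
    and nonneg: "\<And>k. 0 \<le> F k" and zero: "F 0 = 0"
begin

lemma nn_integral_ann_majorant_sq_le_H0_sector:
  assumes "fock_vec \<psi>"
  shows "(\<integral>\<^sup>+x. ann_majorant F (\<lambda>y. cmod (\<psi> (Suc n) y)) n x ^ 2 \<partial>M n)
    \<le> coupling_norm F * H0_sector P \<psi> (Suc n)"
proof -
  have "(\<integral>\<^sup>+x. ann_majorant F (\<lambda>y. cmod (\<psi> (Suc n) y)) n x ^ 2 \<partial>M n)
      \<le> coupling_norm F * (\<integral>\<^sup>+y. ennreal (field_energy (Suc n) y * (cmod (\<psi> (Suc n) y))^2) \<partial>M (Suc n))"
    unfolding coupling_norm_def using assms
    by (intro nn_integral_ann_majorant_sq_le nonneg zero fock_vec_symmetric) auto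
  also have "\<dots> \<le> coupling_norm F * H0_sector P \<psi> (Suc n)"
    by (intro mult_left_mono field_energy_le_H0_sector) simp
  finally show ?thesis .
qed

lemma nn_integral_mult_ann_majorant_le:
  assumes "fock_vec \<psi>" and [measurable]: "u \<in> borel_measurable (M n)" and u: "\<And>x. 0 \<le> u x"
  shows "(\<integral>\<^sup>+x. ennreal (u x) * ann_majorant F (\<lambda>y. cmod (\<psi> (Suc n) y)) n x \<partial>M n)
    \<le> ((\<integral>\<^sup>+x. ennreal (u x ^ 2) \<partial>M n) + coupling_norm F * H0_sector P \<psi> (Suc n)) / 2"
proof -
  have [measurable]: "ann_majorant F (\<lambda>y. cmod (\<psi> (Suc n) y)) n \<in> borel_measurable (M n)"
    using assms by measurable
  have "(\<integral>\<^sup>+x. ennreal (u x) * ann_majorant F (\<lambda>y. cmod (\<psi> (Suc n) y)) n x \<partial>M n)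
      \<le> ((\<integral>\<^sup>+x. ennreal (u x) ^ 2 \<partial>M n) + (\<integral>\<^sup>+x. ann_majorant F (\<lambda>y. cmod (\<psi> (Suc n) y)) n x ^ 2 \<partial>M n)) / 2"
    by (rule nn_integral_mult_le_half_sum_squares) measurable
  also have "\<dots> \<le> ((\<integral>\<^sup>+x. ennreal (u x ^ 2) \<partial>M n) + coupling_norm F * H0_sector P \<psi> (Suc n)) / 2"
    using nn_integral_ann_majorant_sq_le_H0_sector[OF assms(1)] u
    by (intro divide_right_mono_ennreal add_mono) (simp_all add: ennreal_power)
  finally show ?thesis .
qed

text \<open>Summability of the sector norms of \<open>b(f) \<psi>\<close> needs the finiteness of
  \<open>\<langle>\<psi>, H\<^sub>P\<^sub>,\<^sub>0 \<psi>\<rangle>\<close>: \<open>fock_normsq\<close> is a \<open>suminf\<close>, which is junk for divergent series.\<close>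

lemma fock_normsq_ann_nonneg:
  assumes \<psi>: "fock_vec \<psi>" "H0_form P \<psi> < \<infinity>"
    and f: "\<And>k. cmod (f k) \<le> F k" and C: "coupling_norm F < \<infinity>"
  shows "0 \<le> fock_normsq (ann f \<psi>)"
proof -
  define t where "t n = (\<integral>x. (cmod (ann f \<psi> n x))\<^sup>2 \<partial>M n)" for n
  have t: "0 \<le> t n" for n
    unfolding t_def by (rule integral_nonneg_AE) auto
  have "ennreal (t n) \<le> (\<integral>\<^sup>+x. ennreal ((cmod (ann f \<psi> n x))\<^sup>2) \<partial>M n)" for n
    unfolding t_def
    by (cases "integrable (M n) (\<lambda>x. (cmod (ann f \<psi> n x))\<^sup>2)")
      (simp_all add: nn_integral_eq_integral not_integrable_integral_eq)
  also have "\<dots> n \<le> (\<integral>\<^sup>+x. ann_majorant F (\<lambda>y. cmod (\<psi> (Suc n) y)) n x ^ 2 \<partial>M n)" for n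
  proof (rule nn_integral_mono)
    fix x
    have "ennreal (cmod (ann f \<psi> n x)) \<le> ann_majorant F (\<lambda>y. cmod (\<psi> (Suc n) y)) n x"
      by (rule cmod_ann_le_ann_majorant) (rule f)
    then show "ennreal ((cmod (ann f \<psi> n x))\<^sup>2) \<le> ann_majorant F (\<lambda>y. cmod (\<psi> (Suc n) y)) n x ^ 2"
      by (simp add: ennreal_power[symmetric] power_mono)
  qed
  also have "\<dots> n \<le> coupling_norm F * H0_sector P \<psi> (Suc n)" for n
    using \<psi>(1) by (rule nn_integral_ann_majorant_sq_le_H0_sector)
  finally have "(\<Sum>n. ennreal (t n)) \<le> (\<Sum>n. coupling_norm F * H0_sector P \<psi> (n + 1))"
    by (intro suminf_le) auto
  also have "\<dots> \<le> coupling_norm F * H0_form P \<psi>"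
    unfolding H0_form_eq_suminf ennreal_suminf_cmult by (intro mult_left_mono ennreal_suminf_shift_le) auto
  also have "\<dots> < \<infinity>"
    using C \<psi> by (simp add: ennreal_mult_less_top)
  finally have "summable t"
    using t by (intro summable_suminf_not_top) auto
  then show ?thesis
    using t by (simp add: fock_normsq_def t_def[symmetric] suminf_nonneg)
qed

end


lemma nn_integral_scaled_field_energy_le:
  assumes "fock_vec \<psi>"
  shows "(\<integral>\<^sup>+y. ennreal (field_energy n y * (c * cmod (\<psi> n y))^2) \<partial>M n) \<le> ennreal (c^2) * H0_sector P \<psi> n"
proof -
  have "(\<integral>\<^sup>+y. ennreal (field_energy n y * (c * cmod (\<psi> n y))^2) \<partial>M n)
      = ennreal (c^2) * (\<integral>\<^sup>+y. ennreal (field_energy n y * (cmod (\<psi> n y))^2) \<partial>M n)"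
    using assms
    by (subst nn_integral_cmult[symmetric])
      (auto intro!: nn_integral_cong simp: power_mult_distrib ennreal_mult'[symmetric] mult_ac)
  also have "\<dots> \<le> ennreal (c^2) * H0_sector P \<psi> n"
    by (intro mult_left_mono field_energy_le_H0_sector) simp
  finally show ?thesis .
qed

lemma nn_integral_scaled_hard_count_le:
  assumes "fock_vec \<psi>"
  shows "(\<integral>\<^sup>+x. ennreal ((hard_count n x + 2) * (c * cmod (\<psi> n x))^2 / 2) \<partial>M n)
    \<le> ennreal (c^2) * ((H0_sector P \<psi> n + 2 * sector_normsq \<psi> n) / 2)"
proof -
  have "ennreal ((hard_count n x + 2) * (c * cmod (\<psi> n x))^2 / 2)
      \<le> ennreal (c^2) * ((ennreal (field_energy n x * (cmod (\<psi> n x))^2) + 2 * ennreal ((cmod (\<psi> n x))^2)) / 2)"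
    for x
  proof -
    have "(hard_count n x + 2) * (c * cmod (\<psi> n x))^2 / 2
        \<le> c^2 * ((field_energy n x * (cmod (\<psi> n x))^2 + 2 * (cmod (\<psi> n x))^2) / 2)"
      using hard_count_le_field_energy[of n x] by (simp add: power_mult_distrib algebra_simps mult_right_mono)
    then have "ennreal ((hard_count n x + 2) * (c * cmod (\<psi> n x))^2 / 2)
        \<le> ennreal (c^2 * ((field_energy n x * (cmod (\<psi> n x))^2 + 2 * (cmod (\<psi> n x))^2) / 2))"
      by (rule ennreal_leI)
    also have "\<dots> = ennreal (c^2) * ((ennreal (field_energy n x * (cmod (\<psi> n x))^2) + 2 * ennreal ((cmod (\<psi> n x))^2)) / 2)"
    proof -
      have A: "0 \<le> field_energy n x * (cmod (\<psi> n x))^2"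
        using field_energy_nonneg[of n x] by simp
      have "ennreal (field_energy n x * (cmod (\<psi> n x))^2 + 2 * (cmod (\<psi> n x))^2)
          = ennreal (field_energy n x * (cmod (\<psi> n x))^2) + 2 * ennreal ((cmod (\<psi> n x))^2)"
        using A by (simp only: ennreal_plus ennreal_mult'[of 2] zero_le_numeral zero_le_power2
            mult_nonneg_nonneg ennreal_numeral)
      moreover have "0 \<le> field_energy n x * (cmod (\<psi> n x))^2 + 2 * (cmod (\<psi> n x))^2"
        using A by simp
      ultimately show ?thesis
        by (simp add: ennreal_mult'[of "c^2"] divide_ennreal[symmetric] ennreal_times_divide)
    qed
    finally show ?thesis .
  qed
  then have "(\<integral>\<^sup>+x. ennreal ((hard_count n x + 2) * (c * cmod (\<psi> n x))^2 / 2) \<partial>M n)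
      \<le> (\<integral>\<^sup>+x. ennreal (c^2) * ((ennreal (field_energy n x * (cmod (\<psi> n x))^2) + 2 * ennreal ((cmod (\<psi> n x))^2)) / 2) \<partial>M n)"
    by (intro nn_integral_mono)
  also have "\<dots> = ennreal (c^2) * (((\<integral>\<^sup>+x. ennreal (field_energy n x * (cmod (\<psi> n x))^2) \<partial>M n) + 2 * sector_normsq \<psi> n) / 2)"
    using assms unfolding sector_normsq_def
    by (simp add: nn_integral_cmult nn_integral_divide nn_integral_add)
  also have "\<dots> \<le> ennreal (c^2) * ((H0_sector P \<psi> n + 2 * sector_normsq \<psi> n) / 2)"
    by (intro mult_left_mono divide_right_mono_ennreal add_mono field_energy_le_H0_sector) auto
  finally show ?thesis .
qed

lemma ennreal_cmod_sector_inner_le: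
  "ennreal (cmod (\<integral>x. cnj (\<psi> n x) * h x \<partial>M n))
    \<le> (\<integral>\<^sup>+x. ennreal (cmod (\<psi> n x)) * ennreal (cmod (h x)) \<partial>M n)"
  using ennreal_norm_integral_le[of "M n" "\<lambda>x. cnj (\<psi> n x) * h x"] by (simp add: norm_mult ennreal_mult)

lemma abs_Re_suminf_le:
  fixes a :: "nat \<Rightarrow> complex"
  assumes le: "\<And>n. ennreal (cmod (a n)) \<le> e n" and sum: "(\<Sum>n. e n) \<le> ennreal R" and R: "0 \<le> R"
  shows "\<bar>Re (suminf a)\<bar> \<le> R"
proof -
  have "(\<Sum>n. ennreal (cmod (a n))) \<le> (\<Sum>n. e n)"
    using le by (intro suminf_le) auto
  then have "(\<Sum>n. ennreal (cmod (a n))) \<le> ennreal R"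
    using sum by (rule order_trans)
  moreover from this have summable: "summable (\<lambda>n. cmod (a n))"
    by (intro summable_suminf_not_top) (auto simp: top_unique)
  ultimately have "ennreal (\<Sum>n. cmod (a n)) \<le> ennreal R"
    by (simp add: suminf_ennreal2)
  then have "(\<Sum>n. cmod (a n)) \<le> R"
    using R by simp
  moreover have "\<bar>Re (suminf a)\<bar> \<le> (\<Sum>n. cmod (a n))"
    using abs_Re_le_cmod[of "suminf a"] summable_norm[OF summable] by linarith
  ultimately show ?thesis
    by linarith
qed


lemma coupling_majorant_fB_majorant:
  "0 \<le> c \<Longrightarrow> coupling_majorant (\<lambda>k. c * fB_majorant k)"
  by unfold_locales (simp_all add: fB_majorant_nonneg fB_majorant_def)

lemma coupling_majorant_fPhi:
  assumes "0 < tau"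
  shows "coupling_majorant (\<lambda>k. cmod (fPhi tau Lam k))"
proof
  show "(\<lambda>k. cmod (fPhi tau Lam k)) \<in> borel_measurable borel"
    by (rule borel_measurable_cmod_fPhi)
qed (use assms in \<open>simp_all add: fPhi_def\<close>)

definition CB :: real where
  "CB = enn2real (coupling_norm fB_majorant)"

definition DB :: real where
  "DB = enn2real (\<integral>\<^sup>+k. (\<integral>\<^sup>+k'. ennreal (fB_majorant k^2 * fB_majorant k'^2 / (norm k + norm k')) \<partial>lborel) \<partial>lborel)"

definition CPhi :: real where
  "CPhi = enn2real (\<integral>\<^sup>+k. ennreal (indicator {k. 0 < norm k \<and> norm k < 2} k * norm k powr (-2)) \<partial>(lborel :: (real^3) measure))"

lemma coupling_norm_fB_majorant: "coupling_norm fB_majorant = ennreal CB"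
  using nn_integral_fB_majorant_finite unfolding CB_def coupling_norm_def by (simp add: ennreal_enn2real)

lemma pair_kernel_fB_majorant:
  "(\<integral>\<^sup>+k. (\<integral>\<^sup>+k'. ennreal (fB_majorant k^2 * fB_majorant k'^2 / (norm k + norm k')) \<partial>lborel) \<partial>lborel) = ennreal DB"
  using nn_integral_fB_majorant_pair_finite unfolding DB_def by (simp add: ennreal_enn2real)

lemma coupling_norm_fPhi_le:
  "0 < tau \<Longrightarrow> Lam \<le> 2 \<Longrightarrow> coupling_norm (\<lambda>k. cmod (fPhi tau Lam k)) \<le> ennreal CPhi"
  using nn_integral_fPhi_le nn_integral_norm_powr_ball_finite[of "-2" 2]
  unfolding coupling_norm_def CPhi_def by (simp add: ennreal_enn2real)

lemma H0_form_eq_ennreal: "H0_form P \<psi> < \<infinity> \<Longrightarrow> H0_form P \<psi> = ennreal (enn2real (H0_form P \<psi>))"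
  by (simp add: ennreal_enn2real)

lemma sector_inner_ann_fPhi_le:
  assumes \<psi>: "fock_vec \<psi>" and tau: "0 < tau"
  shows "ennreal (cmod (\<integral>x. cnj (\<psi> n x) * ann (fPhi tau Lam) \<psi> n x \<partial>M n))
    \<le> (sector_normsq \<psi> n + coupling_norm (\<lambda>k. cmod (fPhi tau Lam k)) * H0_sector P \<psi> (Suc n)) / 2"
proof -
  let ?F = "\<lambda>k. cmod (fPhi tau Lam k)"
  have "ennreal (cmod (\<integral>x. cnj (\<psi> n x) * ann (fPhi tau Lam) \<psi> n x \<partial>M n))
      \<le> (\<integral>\<^sup>+x. ennreal (cmod (\<psi> n x)) * ennreal (cmod (ann (fPhi tau Lam) \<psi> n x)) \<partial>M n)"
    by (rule ennreal_cmod_sector_inner_le)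
  also have "\<dots> \<le> (\<integral>\<^sup>+x. ennreal (cmod (\<psi> n x)) * ann_majorant ?F (\<lambda>y. cmod (\<psi> (Suc n) y)) n x \<partial>M n)"
    by (intro nn_integral_mono mult_left_mono cmod_ann_le_ann_majorant) auto
  also have "\<dots> \<le> (sector_normsq \<psi> n + coupling_norm ?F * H0_sector P \<psi> (Suc n)) / 2"
    unfolding sector_normsq_def
    by (rule coupling_majorant.nn_integral_mult_ann_majorant_le[OF coupling_majorant_fPhi[OF tau] \<psi>])
      (simp_all add: fock_vec_measurable[OF \<psi>])
  finally show ?thesis .
qed

lemma abs_Re_inner_ann_fPhi_le:
  assumes \<psi>: "fock_vec \<psi>" "H0_form P \<psi> < \<infinity>" and tau: "0 < tau" and Lam: "Lam \<le> 2"
  shows "\<bar>Re (fock_inner \<psi> (ann (fPhi tau Lam) \<psi>))\<bar> \<le> (fock_normsq \<psi> + CPhi * enn2real (H0_form P \<psi>)) / 2"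
  unfolding fock_inner_def
proof (rule abs_Re_suminf_le[OF sector_inner_ann_fPhi_le[OF \<psi>(1) tau]])
  let ?C = "coupling_norm (\<lambda>k. cmod (fPhi tau Lam k))"
  have "(\<Sum>n. (sector_normsq \<psi> n + ?C * H0_sector P \<psi> (Suc n)) / 2)
      = ((\<Sum>n. sector_normsq \<psi> n) + ?C * (\<Sum>n. H0_sector P \<psi> (n + 1))) / 2"
    by (simp add: suminf_add[symmetric])
  also have "\<dots> \<le> (ennreal (fock_normsq \<psi>) + ennreal CPhi * H0_form P \<psi>) / 2"
    using \<psi> tau Lam unfolding H0_form_eq_suminf
    by (intro divide_right_mono_ennreal add_mono mult_mono coupling_norm_fPhi_le ennreal_suminf_shift_le)
      (simp_all add: suminf_sector_normsq)
  also have "\<dots> = ennreal ((fock_normsq \<psi> + CPhi * enn2real (H0_form P \<psi>)) / 2)"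
    using \<psi> fock_normsq_nonneg[OF \<psi>(1)] H0_form_eq_ennreal[OF \<psi>(2)]
    by (simp add: ennreal_plus ennreal_mult' divide_ennreal[symmetric] CPhi_def)
  finally show "(\<Sum>n. (sector_normsq \<psi> n + ?C * H0_sector P \<psi> (Suc n)) / 2)
      \<le> ennreal ((fock_normsq \<psi> + CPhi * enn2real (H0_form P \<psi>)) / 2)" .
  show "0 \<le> (fock_normsq \<psi> + CPhi * enn2real (H0_form P \<psi>)) / 2"
    using fock_normsq_nonneg[OF \<psi>(1)] by (simp add: CPhi_def)
qed


lemma borel_measurable_Pf_component [measurable]:
  "(\<lambda>x. \<bar>(P - Pf n x) $ j\<bar>) \<in> borel_measurable (M n)"
proof -
  have "(\<lambda>v::real^3. v $ j) \<in> borel_measurable borel"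
    by (intro borel_measurable_continuous_onI continuous_on_component continuous_on_id)
  from measurable_compose[OF _ this, of "\<lambda>x. P - Pf n x"] show ?thesis
    by measurable
qed

lemma nn_integral_kinetic_component_le:
  assumes "fock_vec \<psi>"
  shows "(\<integral>\<^sup>+x. ennreal ((\<bar>(P - Pf n x) $ j\<bar> * cmod (\<psi> n x))^2) \<partial>M n) \<le> 2 * H0_sector P \<psi> n"
proof -
  have "(\<bar>(P - Pf n x) $ j\<bar> * cmod (\<psi> n x))^2 \<le> (norm (P - Pf n x))^2 * (cmod (\<psi> n x))^2" for x
    unfolding power_mult_distrib by (intro mult_right_mono power_mono component_le_norm_cart) auto
  then have "(\<integral>\<^sup>+x. ennreal ((\<bar>(P - Pf n x) $ j\<bar> * cmod (\<psi> n x))^2) \<partial>M n)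
      \<le> (\<integral>\<^sup>+x. ennreal ((norm (P - Pf n x))^2 * (cmod (\<psi> n x))^2) \<partial>M n)"
    by (intro nn_integral_mono ennreal_leI)
  also have "\<dots> \<le> 2 * H0_sector P \<psi> n"
    by (rule kinetic_le_H0_sector[OF assms])
  finally show ?thesis .
qed

text \<open>The weight \<open>|g|\<close> is split as \<open>\<surd>|g| \<cdot> \<surd>|g|\<close> between the two factors of AM-GM.\<close>

lemma cmod_ann_fB_le_sqrt:
  assumes \<psi>: "fock_vec \<psi>" and kappa: "1 < kappa"
  shows "ennreal (cmod (ann (fB g kappa s j) \<psi> n x))
    \<le> ennreal (sqrt \<bar>g\<bar>) * ann_majorant (\<lambda>k. sqrt \<bar>g\<bar> * fB_majorant k) (\<lambda>y. cmod (\<psi> (Suc n) y)) n x"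
proof -
  have "ennreal (cmod (ann (fB g kappa s j) \<psi> n x))
      \<le> ann_majorant (\<lambda>k. sqrt \<bar>g\<bar> * (sqrt \<bar>g\<bar> * fB_majorant k)) (\<lambda>y. cmod (\<psi> (Suc n) y)) n x"
    using cmod_fB_le[OF kappa] by (intro cmod_ann_le_ann_majorant) (simp add: mult.assoc[symmetric])
  also have "\<dots> = ennreal (sqrt \<bar>g\<bar>) * ann_majorant (\<lambda>k. sqrt \<bar>g\<bar> * fB_majorant k) (\<lambda>y. cmod (\<psi> (Suc n) y)) n x"
    using \<psi> by (intro ann_majorant_scale) simp_all
  finally show ?thesis .
qed

lemma sector_inner_mulPPf_ann_fB_le:
  assumes \<psi>: "fock_vec \<psi>" and kappa: "1 < kappa"
  shows "ennreal (cmod (\<integral>x. cnj (\<psi> n x) * mulPPf P j (ann (fB g kappa s j) \<psi>) n x \<partial>M n))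
    \<le> ennreal \<bar>g\<bar> * (2 * H0_sector P \<psi> n + ennreal CB * H0_sector P \<psi> (Suc n)) / 2"
proof -
  define F where "F k = sqrt \<bar>g\<bar> * fB_majorant k" for k
  define v where "v x = \<bar>(P - Pf n x) $ j\<bar> * cmod (\<psi> n x)" for x
  have F: "coupling_majorant F"
    unfolding F_def by (rule coupling_majorant_fB_majorant) simp
  have v [measurable]: "v \<in> borel_measurable (M n)"
    unfolding v_def using \<psi> by measurable
  have "ennreal (cmod (\<psi> n x)) * ennreal (cmod (mulPPf P j (ann (fB g kappa s j) \<psi>) n x))
      = ennreal (v x) * ennreal (cmod (ann (fB g kappa s j) \<psi> n x))" for x
    by (simp add: v_def mulPPf_def norm_mult ennreal_mult mult_ac del: of_real_diff)
  also have "\<dots> x \<le> ennreal (sqrt \<bar>g\<bar> * v x) * ann_majorant F (\<lambda>y. cmod (\<psi> (Suc n) y)) n x" for x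
  proof -
    have "ennreal (cmod (ann (fB g kappa s j) \<psi> n x)) \<le> ennreal (sqrt \<bar>g\<bar>) * ann_majorant F (\<lambda>y. cmod (\<psi> (Suc n) y)) n x"
      unfolding F_def[abs_def] by (rule cmod_ann_fB_le_sqrt[OF \<psi> kappa])
    then have "ennreal (v x) * ennreal (cmod (ann (fB g kappa s j) \<psi> n x))
        \<le> ennreal (v x) * (ennreal (sqrt \<bar>g\<bar>) * ann_majorant F (\<lambda>y. cmod (\<psi> (Suc n) y)) n x)"
      by (rule mult_left_mono) simp
    then show ?thesis
      by (simp add: v_def ennreal_mult mult_ac)
  qed
  finally have "ennreal (cmod (\<integral>x. cnj (\<psi> n x) * mulPPf P j (ann (fB g kappa s j) \<psi>) n x \<partial>M n))
      \<le> (\<integral>\<^sup>+x. ennreal (sqrt \<bar>g\<bar> * v x) * ann_majorant F (\<lambda>y. cmod (\<psi> (Suc n) y)) n x \<partial>M n)"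
    by (intro order_trans[OF ennreal_cmod_sector_inner_le] nn_integral_mono)
  also have "\<dots> \<le> ((\<integral>\<^sup>+x. ennreal ((sqrt \<bar>g\<bar> * v x) ^ 2) \<partial>M n) + coupling_norm F * H0_sector P \<psi> (Suc n)) / 2"
    by (rule coupling_majorant.nn_integral_mult_ann_majorant_le[OF F \<psi>]) (measurable, simp add: v_def)
  also have "(\<integral>\<^sup>+x. ennreal ((sqrt \<bar>g\<bar> * v x) ^ 2) \<partial>M n) = ennreal \<bar>g\<bar> * (\<integral>\<^sup>+x. ennreal (v x ^ 2) \<partial>M n)"
    by (subst nn_integral_cmult[symmetric]) (simp_all add: power_mult_distrib ennreal_mult)
  also have "(\<integral>\<^sup>+x. ennreal (v x ^ 2) \<partial>M n) \<le> 2 * H0_sector P \<psi> n"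
    unfolding v_def by (rule nn_integral_kinetic_component_le[OF \<psi>])
  also have "coupling_norm F = ennreal \<bar>g\<bar> * ennreal CB"
    unfolding F_def by (simp add: coupling_norm_scale coupling_norm_fB_majorant)
  finally show ?thesis
    by (simp add: distrib_left mult.assoc mult_left_mono divide_right_mono_ennreal)
qed

lemma abs_Re_inner_mulPPf_ann_fB_le:
  assumes \<psi>: "fock_vec \<psi>" "H0_form P \<psi> < \<infinity>" and kappa: "1 < kappa"
  shows "\<bar>Re (fock_inner \<psi> (mulPPf P j (ann (fB g kappa s j) \<psi>)))\<bar>
    \<le> \<bar>g\<bar> * (2 + CB) * enn2real (H0_form P \<psi>) / 2"
  unfolding fock_inner_def
proof (rule abs_Re_suminf_le[OF sector_inner_mulPPf_ann_fB_le[OF \<psi>(1) kappa]])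
  have "(\<Sum>n. ennreal \<bar>g\<bar> * (2 * H0_sector P \<psi> n + ennreal CB * H0_sector P \<psi> (Suc n)) / 2)
      = ennreal \<bar>g\<bar> * (2 * (\<Sum>n. H0_sector P \<psi> n) + ennreal CB * (\<Sum>n. H0_sector P \<psi> (n + 1))) / 2"
    by (simp add: suminf_add[symmetric] ennreal_times_divide[symmetric])
  also have "\<dots> \<le> ennreal \<bar>g\<bar> * (2 * H0_form P \<psi> + ennreal CB * H0_form P \<psi>) / 2"
    unfolding H0_form_eq_suminf
    by (intro divide_right_mono_ennreal mult_left_mono add_mono ennreal_suminf_shift_le) simp_all
  also have "\<dots> = ennreal (\<bar>g\<bar> * (2 + CB) * enn2real (H0_form P \<psi>) / 2)"
  proof -
    define h where "h = enn2real (H0_form P \<psi>)"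
    have CB: "0 \<le> CB"
      by (simp add: CB_def)
    have "ennreal ((2 + CB) * h) = 2 * ennreal h + ennreal CB * ennreal h"
      using CB by (simp add: h_def ennreal_mult' distrib_right)
    moreover have "ennreal (\<bar>g\<bar> * ((2 + CB) * h) / 2) = ennreal \<bar>g\<bar> * ennreal ((2 + CB) * h) / 2"
      using divide_ennreal[of "\<bar>g\<bar> * ((2 + CB) * h)" 2] ennreal_mult'[of "\<bar>g\<bar>" "(2 + CB) * h"] CB
      by (simp add: h_def)
    ultimately show ?thesis
      using H0_form_eq_ennreal[OF \<psi>(2)] by (simp add: h_def mult.assoc)
  qed
  finally show "(\<Sum>n. ennreal \<bar>g\<bar> * (2 * H0_sector P \<psi> n + ennreal CB * H0_sector P \<psi> (Suc n)) / 2)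
      \<le> ennreal (\<bar>g\<bar> * (2 + CB) * enn2real (H0_form P \<psi>) / 2)" .
qed (simp add: CB_def)


lemma cmod_ann_ann_le:
  assumes f: "\<And>k. cmod (f k) \<le> F k"
  shows "ennreal (cmod (ann f (ann f \<psi>) n x))
    \<le> ennreal (sqrt (real n + 1))
       * (\<integral>\<^sup>+k. ennreal (F k) * ann_majorant F (\<lambda>y. cmod (\<psi> (Suc (Suc n)) y)) (Suc n) (kcons k x n) \<partial>lborel)"
proof -
  have "ennreal (cmod (f k) * cmod (ann f \<psi> (Suc n) z))
      \<le> ennreal (F k) * ann_majorant F (\<lambda>y. cmod (\<psi> (Suc (Suc n)) y)) (Suc n) z" for k z
  proof -
    have "ennreal (cmod (f k) * cmod (ann f \<psi> (Suc n) z)) = ennreal (cmod (f k)) * ennreal (cmod (ann f \<psi> (Suc n) z))"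
      by (simp add: ennreal_mult)
    also have "\<dots> \<le> ennreal (F k) * ann_majorant F (\<lambda>y. cmod (\<psi> (Suc (Suc n)) y)) (Suc n) z"
      using f by (intro mult_mono ennreal_leI cmod_ann_le_ann_majorant) auto
    finally show ?thesis .
  qed
  then show ?thesis
    by (intro order_trans[OF cmod_ann_le] mult_left_mono nn_integral_mono) auto
qed

lemma ann_majorant_iterate_eq:
  assumes [measurable]: "F \<in> borel_measurable borel" "\<phi> \<in> borel_measurable (M (Suc (Suc n)))"
    and F: "\<And>k. 0 \<le> F k" and \<phi>: "\<And>y. 0 \<le> \<phi> y" and a: "0 \<le> a"
  shows "ennreal a * (ennreal (sqrt (real n + 1)) * (\<integral>\<^sup>+k. ennreal (F k) * ann_majorant F \<phi> (Suc n) (kcons k x n) \<partial>lborel))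
    = (\<integral>\<^sup>+k. (\<integral>\<^sup>+k'. ennreal (sqrt ((real n + 1) * (real n + 2)) * a * (F k * F k')
         * \<phi> (kcons k' (kcons k x n) (Suc n))) \<partial>lborel) \<partial>lborel)"
proof -
  let ?c = "ennreal a * ennreal (sqrt (real n + 1))"
  have "?c * (ennreal (F k) * ann_majorant F \<phi> (Suc n) (kcons k x n))
      = (\<integral>\<^sup>+k'. ennreal (sqrt ((real n + 1) * (real n + 2)) * a * (F k * F k')
          * \<phi> (kcons k' (kcons k x n) (Suc n))) \<partial>lborel)" for k
  proof -
    have "?c * (ennreal (F k) * ann_majorant F \<phi> (Suc n) (kcons k x n))
        = ?c * ennreal (F k) * ennreal (sqrt (real n + 2))
          * (\<integral>\<^sup>+k'. ennreal (F k' * \<phi> (kcons k' (kcons k x n) (Suc n))) \<partial>lborel)"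
      by (simp add: ann_majorant_def mult_ac add.commute)
    also have "\<dots> = (\<integral>\<^sup>+k'. ?c * ennreal (F k) * ennreal (sqrt (real n + 2))
        * ennreal (F k' * \<phi> (kcons k' (kcons k x n) (Suc n))) \<partial>lborel)"
      by (rule nn_integral_cmult[symmetric]) measurable
    also have "\<dots> = (\<integral>\<^sup>+k'. ennreal (sqrt ((real n + 1) * (real n + 2)) * a * (F k * F k')
        * \<phi> (kcons k' (kcons k x n) (Suc n))) \<partial>lborel)"
      using F \<phi> a by (intro nn_integral_cong) (simp add: ennreal_mult[symmetric] real_sqrt_mult mult_ac)
    finally show ?thesis .
  qed
  moreover have "ennreal a * (ennreal (sqrt (real n + 1)) * (\<integral>\<^sup>+k. ennreal (F k) * ann_majorant F \<phi> (Suc n) (kcons k x n) \<partial>lborel))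
      = (\<integral>\<^sup>+k. ?c * (ennreal (F k) * ann_majorant F \<phi> (Suc n) (kcons k x n)) \<partial>lborel)"
    by (subst nn_integral_cmult) (measurable, simp add: mult.assoc)
  ultimately show ?thesis
    by simp
qed

lemma sector_inner_ann_ann_fB_le:
  assumes \<psi>: "fock_vec \<psi>" and kappa: "1 < kappa"
  shows "ennreal (cmod (\<integral>x. cnj (\<psi> n x) * ann (fB g kappa s j) (ann (fB g kappa s j) \<psi>) n x \<partial>M n))
    \<le> ennreal (g^2) * (ennreal DB * ((H0_sector P \<psi> n + 2 * sector_normsq \<psi> n) / 2) + H0_sector P \<psi> (Suc (Suc n)))"
proof -
  let ?f = "fB g kappa s j" and ?F = "\<lambda>k. \<bar>g\<bar> * fB_majorant k"
  let ?c = "sqrt ((real n + 1) * (real n + 2))"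
  define \<phi>a where "\<phi>a x = \<bar>g\<bar> * cmod (\<psi> n x)" for x
  define \<phi>b where "\<phi>b y = \<bar>g\<bar> * cmod (\<psi> (Suc (Suc n)) y)" for y
  have \<phi>a_meas [measurable]: "\<phi>a \<in> borel_measurable (M n)"
    and \<phi>b_meas [measurable]: "\<phi>b \<in> borel_measurable (M (Suc (Suc n)))"
    unfolding \<phi>a_def \<phi>b_def using \<psi> by measurable
  have sym: "symmetric_cfg (Suc (Suc n)) \<phi>b"
    using fock_vec_symmetric[OF \<psi>, of "Suc (Suc n)"] by (simp add: symmetric_cfg_def \<phi>b_def)
  have "ennreal (cmod (\<integral>x. cnj (\<psi> n x) * ann ?f (ann ?f \<psi>) n x \<partial>M n))
      \<le> (\<integral>\<^sup>+x. ennreal (cmod (\<psi> n x)) * (ennreal (sqrt (real n + 1))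
          * (\<integral>\<^sup>+k. ennreal (?F k) * ann_majorant ?F (\<lambda>y. cmod (\<psi> (Suc (Suc n)) y)) (Suc n) (kcons k x n) \<partial>lborel)) \<partial>M n)"
    using cmod_fB_le[OF kappa]
    by (intro order_trans[OF ennreal_cmod_sector_inner_le] nn_integral_mono mult_left_mono cmod_ann_ann_le) auto
  also have "\<dots> = (\<integral>\<^sup>+x. (\<integral>\<^sup>+k. (\<integral>\<^sup>+k'. ennreal (?c * \<phi>a x * (fB_majorant k * fB_majorant k')
      * \<phi>b (kcons k' (kcons k x n) (Suc n))) \<partial>lborel) \<partial>lborel) \<partial>M n)"
    using \<psi> by (intro nn_integral_cong, subst ann_majorant_iterate_eq)
      (simp_all add: fB_majorant_nonneg \<phi>a_def \<phi>b_def mult_ac)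
  also have "\<dots> \<le> ennreal DB * (\<integral>\<^sup>+x. ennreal ((hard_count n x + 2) * \<phi>a x^2 / 2) \<partial>M n)
      + (\<integral>\<^sup>+y. ennreal (field_energy (Suc (Suc n)) y * \<phi>b y^2) \<partial>M (Suc (Suc n)))"
    unfolding pair_kernel_fB_majorant[symmetric]
    by (rule nn_integral_double_annihilation_le[OF borel_measurable_fB_majorant fB_majorant_nonneg
          fB_majorant_hard \<phi>a_meas _ \<phi>b_meas _ sym]) (simp_all add: \<phi>a_def \<phi>b_def)
  also have "\<dots> \<le> ennreal DB * (ennreal (\<bar>g\<bar>^2) * ((H0_sector P \<psi> n + 2 * sector_normsq \<psi> n) / 2))
      + ennreal (\<bar>g\<bar>^2) * H0_sector P \<psi> (Suc (Suc n))"
    unfolding \<phi>a_def \<phi>b_def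
    by (intro add_mono mult_left_mono nn_integral_scaled_hard_count_le nn_integral_scaled_field_energy_le \<psi>)
      simp
  finally show ?thesis
    by (simp add: distrib_left mult_ac)
qed

lemma abs_Re_inner_ann_ann_fB_le:
  assumes \<psi>: "fock_vec \<psi>" "H0_form P \<psi> < \<infinity>" and kappa: "1 < kappa"
  shows "\<bar>Re (fock_inner \<psi> (ann (fB g kappa s j) (ann (fB g kappa s j) \<psi>)))\<bar>
    \<le> g^2 * (DB * (enn2real (H0_form P \<psi>) + 2 * fock_normsq \<psi>) / 2 + enn2real (H0_form P \<psi>))"
  unfolding fock_inner_def
proof (rule abs_Re_suminf_le[OF sector_inner_ann_ann_fB_le[OF \<psi>(1) kappa]])
  define h where "h = enn2real (H0_form P \<psi>)"
  define N where "N = fock_normsq \<psi>"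
  have nonneg: "0 \<le> DB" "0 \<le> h" "0 \<le> N"
    using fock_normsq_nonneg[OF \<psi>(1)] by (simp_all add: DB_def h_def N_def)
  have "(\<Sum>n. ennreal (g^2) * (ennreal DB * ((H0_sector P \<psi> n + 2 * sector_normsq \<psi> n) / 2) + H0_sector P \<psi> (Suc (Suc n))))
      = ennreal (g^2) * (ennreal DB * (((\<Sum>n. H0_sector P \<psi> n) + 2 * (\<Sum>n. sector_normsq \<psi> n)) / 2)
          + (\<Sum>n. H0_sector P \<psi> (n + 2)))"
    by (simp add: suminf_add[symmetric] ennreal_times_divide[symmetric] distrib_left)
  also have "\<dots> \<le> ennreal (g^2) * (ennreal DB * ((ennreal h + 2 * ennreal N) / 2) + ennreal h)"
    using H0_form_eq_ennreal[OF \<psi>(2)] suminf_sector_normsq[OF \<psi>(1)]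
      ennreal_suminf_shift_le[of "H0_sector P \<psi>" 2]
    unfolding H0_form_eq_suminf h_def N_def
    by (intro mult_left_mono add_mono order_refl) simp_all
  also have "\<dots> = ennreal (g^2 * (DB * (h + 2 * N) / 2 + h))"
  proof -
    have "ennreal (h + 2 * N) = ennreal h + 2 * ennreal N"
      using nonneg by (simp add: ennreal_plus ennreal_mult'[of 2])
    then have "ennreal (DB * (h + 2 * N) / 2) = ennreal DB * (ennreal h + 2 * ennreal N) / 2"
      using nonneg divide_ennreal[of "DB * (h + 2 * N)" 2] by (simp add: ennreal_mult')
    then show ?thesis
      using nonneg by (simp add: ennreal_mult'[of "g^2"] ennreal_plus[of "DB * (h + 2 * N) / 2" h] ennreal_times_divide)
  qed
  finally show "(\<Sum>n. ennreal (g^2) * (ennreal DB * ((H0_sector P \<psi> n + 2 * sector_normsq \<psi> n) / 2) + H0_sector P \<psi> (Suc (Suc n))))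
      \<le> ennreal (g^2 * (DB * (enn2real (H0_form P \<psi>) + 2 * fock_normsq \<psi>) / 2 + enn2real (H0_form P \<psi>)))"
    by (simp add: h_def N_def)
  show "0 \<le> g^2 * (DB * (enn2real (H0_form P \<psi>) + 2 * fock_normsq \<psi>) / 2 + enn2real (H0_form P \<psi>))"
    using nonneg by (simp add: h_def N_def)
qed


section \<open>The quadratic form of \<open>H'\<^sub>P|\<^sup>n\<^sub>m\<close>\<close>

lemma abs_sum_UNIV_3_le:
  fixes f :: "3 \<Rightarrow> real"
  assumes "\<And>j. \<bar>f j\<bar> \<le> B"
  shows "\<bar>\<Sum>j\<in>UNIV. f j\<bar> \<le> 3 * B"
  by (rule order_trans[OF sum_abs]) (use sum_bounded_above[of UNIV "\<lambda>j. \<bar>f j\<bar>" B] assms in simp)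

lemma sum_Re_inner_ann_ann_fB_ge:
  assumes \<psi>: "fock_vec \<psi>" "H0_form P \<psi> < \<infinity>" and kappa: "1 < kappa" and g: "\<bar>g\<bar> \<le> 1"
  defines "h \<equiv> enn2real (H0_form P \<psi>)" and "N \<equiv> fock_normsq \<psi>"
  shows "- (3 * (\<bar>g\<bar> * (DB * (h + 2 * N) / 2 + h)))
    \<le> (\<Sum>j\<in>UNIV. Re (fock_inner \<psi> (ann (fB g kappa s j) (ann (fB g kappa s j) \<psi>))))"
proof -
  have "0 \<le> DB * (h + 2 * N) / 2 + h"
    using fock_normsq_nonneg[OF \<psi>(1)] by (simp add: h_def N_def DB_def)
  moreover have "g^2 \<le> \<bar>g\<bar>"
    using g mult_left_le[of "\<bar>g\<bar>" "\<bar>g\<bar>"] by (simp add: power2_eq_square abs_mult_self_eq)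
  ultimately have "g^2 * (DB * (h + 2 * N) / 2 + h) \<le> \<bar>g\<bar> * (DB * (h + 2 * N) / 2 + h)"
    by (intro mult_right_mono)
  moreover have "\<bar>\<Sum>j\<in>UNIV. Re (fock_inner \<psi> (ann (fB g kappa s j) (ann (fB g kappa s j) \<psi>)))\<bar>
      \<le> 3 * (g^2 * (DB * (h + 2 * N) / 2 + h))"
    unfolding h_def N_def by (intro abs_sum_UNIV_3_le abs_Re_inner_ann_ann_fB_le[OF \<psi> kappa])
  ultimately show ?thesis
    by linarith
qed

definition c_a :: real where
  "c_a = 3 * DB / 2 + 9 + 3 * CB + CPhi"

definition c_b :: real where
  "c_b = 3 * DB + 1"

lemma c_a_pos: "0 < c_a" and c_b_pos: "0 < c_b"
proof -
  have "0 \<le> DB" "0 \<le> CB" "0 \<le> CPhi"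
    by (simp_all add: DB_def CB_def CPhi_def)
  then show "0 < c_a" "0 < c_b"
    by (simp_all add: c_a_def c_b_def)
qed

lemma Hprime_form_lower_bound:
  assumes \<psi>: "fock_vec \<psi>" "H0_form P \<psi> < \<infinity>"
    and kappa: "1 < kappa" "kappa \<le> 2" and tau: "0 < tau" and g: "\<bar>g\<bar> \<le> 1"
  shows "enn2real (H0_form P \<psi>) - \<bar>g\<bar> * (c_a * enn2real (H0_form P \<psi>) + c_b * fock_normsq \<psi>)
    \<le> Hprime_form g kappa s tau P \<psi>"
proof -
  define h where "h = enn2real (H0_form P \<psi>)"
  define N where "N = fock_normsq \<psi>"
  let ?f = "\<lambda>j. fB g kappa s j"
  have BB: "- (3 * (\<bar>g\<bar> * (DB * (h + 2 * N) / 2 + h)))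
      \<le> (\<Sum>j\<in>UNIV. Re (fock_inner \<psi> (ann (?f j) (ann (?f j) \<psi>))))"
    unfolding h_def N_def by (rule sum_Re_inner_ann_ann_fB_ge[OF \<psi> kappa(1) g])
  have "coupling_norm (\<lambda>k. \<bar>g\<bar> * fB_majorant k) < \<infinity>"
    unfolding coupling_norm_scale[OF borel_measurable_fB_majorant] coupling_norm_fB_majorant
    by (simp add: ennreal_mult_less_top)
  then have BstarB: "0 \<le> (\<Sum>j\<in>UNIV. fock_normsq (ann (?f j) \<psi>))"
    by (intro sum_nonneg coupling_majorant.fock_normsq_ann_nonneg[OF coupling_majorant_fB_majorant \<psi>])
      (simp_all add: cmod_fB_le[OF kappa(1)])
  have "\<bar>\<Sum>j\<in>UNIV. Re (fock_inner \<psi> (mulPPf P j (ann (?f j) \<psi>)))\<bar> \<le> 3 * (\<bar>g\<bar> * (2 + CB) * h / 2)"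
    unfolding h_def by (intro abs_sum_UNIV_3_le abs_Re_inner_mulPPf_ann_fB_le[OF \<psi> kappa(1)])
  then have PB: "(\<Sum>j\<in>UNIV. Re (fock_inner \<psi> (mulPPf P j (ann (?f j) \<psi>)))) \<le> 3 * (\<bar>g\<bar> * (2 + CB) * h / 2)"
    by linarith
  have "\<bar>g * (2 * Re (fock_inner \<psi> (ann (fPhi tau kappa) \<psi>)))\<bar> \<le> \<bar>g\<bar> * (N + CPhi * h)"
    using abs_Re_inner_ann_fPhi_le[OF \<psi> tau kappa(2)]
    by (simp add: abs_mult h_def N_def mult_left_mono)
  then have Phi: "- (\<bar>g\<bar> * (N + CPhi * h)) \<le> g * (2 * Re (fock_inner \<psi> (ann (fPhi tau kappa) \<psi>)))"
    by linarith
  have "3 * (\<bar>g\<bar> * (DB * (h + 2 * N) / 2 + h)) + 2 * (3 * (\<bar>g\<bar> * (2 + CB) * h / 2)) + \<bar>g\<bar> * (N + CPhi * h)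
      = \<bar>g\<bar> * (c_a * h + c_b * N)"
    by (simp add: c_a_def c_b_def field_simps)
  then show ?thesis
    using BB BstarB PB Phi unfolding Hprime_form_def h_def N_def by linarith
qed

theorem lemma3p2:
  fixes kappa beta gamma :: real and P :: "real^3"
  assumes "1 < kappa" "kappa < 2" "1 < beta" "0 < gamma" "gamma < 1/2"
  shows "\<exists>ca cb :: real. 0 < ca \<and> 0 < cb \<and>
     (\<forall>(n::nat) (m::nat) (g::real) (psi::fock).
        \<bar>g\<bar> \<le> 1 \<longrightarrow> \<bar>g\<bar> < 1 / ca \<longrightarrow> fock_vec psi \<longrightarrow> H0_form P psi < \<infinity> \<longrightarrow>
        enn2real (H0_form P psi)
          \<le> 1 / (1 - \<bar>g\<bar> * ca) *
             (Hprime_form g kappa (kappa * beta ^ n) (kappa * gamma ^ m) P psi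
              + \<bar>g\<bar> * cb * fock_normsq psi))"
proof -
  have "enn2real (H0_form P \<psi>)
      \<le> 1 / (1 - \<bar>g\<bar> * c_a) * (Hprime_form g kappa (kappa * beta ^ n) (kappa * gamma ^ m) P \<psi>
        + \<bar>g\<bar> * c_b * fock_normsq \<psi>)"
    if g: "\<bar>g\<bar> \<le> 1" "\<bar>g\<bar> < 1 / c_a" and \<psi>: "fock_vec \<psi>" "H0_form P \<psi> < \<infinity>" for n m g \<psi>
  proof -
    have "enn2real (H0_form P \<psi>) * (1 - \<bar>g\<bar> * c_a)
        \<le> Hprime_form g kappa (kappa * beta ^ n) (kappa * gamma ^ m) P \<psi> + \<bar>g\<bar> * c_b * fock_normsq \<psi>"
      using Hprime_form_lower_bound[OF \<psi>, of kappa "kappa * gamma ^ m" g "kappa * beta ^ n"] assms g(1)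
      by (simp add: algebra_simps)
    moreover have "0 < 1 - \<bar>g\<bar> * c_a"
      using g(2) c_a_pos by (simp add: less_divide_eq)
    ultimately show ?thesis
      by (simp add: pos_le_divide_eq)
  qed
  then show ?thesis
    using c_a_pos c_b_pos by blast
qed

end
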